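(* Assume the setting described in the context. Then, both for general contracts and for binary contracts, the second-best cost converges to the first-best cost exponentially at rate $r:=\min_{a\in A^-(c,a^* )}\mathrm{KL}(\mu_a,\mu_{a^*})$; that is, $$C^{\mathrm{SB}}_n(\mu,u,c,a^* )-C^{\mathrm{FB}}(u,c,a^* )=\exp[-r n+o(n)]\quad\text{and}\quad C^{\mathrm{bin}}_n(\mu,u,c,a^* )-C^{\mathrm{FB}}(u,c,a^* )=\exp[-r n+o(n)]$$ as $n\to\infty$.
   Context: A principal and an agent. The agent chooses an action from a finite set $A$. A monitoring technology $\mu=(\mu_a)_{a\in A}$ consists of Borel probability measures $\mu_a$ on a signal space $X$ (a subset of a Euclidean space) such that: $\mu_a\neq\mu_{a'}$ for $a\neq a'$; $\mu_{a'}$ is absolutely continuous with respect to $\mu_a$ for all $a,a'\in A$; and $\int \big(\frac{d\mu_{a'}}{d\mu_a}(x)\big)^\lambda d\mu_a(x)<\infty$ for all $\lambda>0$ and all $a,a'$. If the agent chooses $a$, the principal observes $x^n=(x_1,\dots,x_n)$, i.i.d. draws from $\mu_a$; $\mathbb{P}_a,\mathbb{E}_a,\mathrm{Var}_a$ denote the corresponding probability, expectation and variance. Fix a target action $a^*\in A$ and a wage lower bound $\underline w\in\mathbb{R}$. The agent has utility $u:[\underline w,\infty)\to\mathbb{R}$ over money and cost $c:A\to\mathbb{R}$, with outside option $0$, and: (i) $u$ is $C^2$ with $u'>0$, $u''<0$ and $\lim_{w\to\infty}u'(w)=0$; (ii) $c(A)\subseteq\mathrm{int}\,u([\underline w,\infty))$;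 (iii) $c(a^* )>c(a)$ for some $a\in A$ and $c(a^* )\neq c(a)$ for all $a\neq a^*$. Let $h:=u^{-1}$. A contract is a measurable $w:X^n\to[\underline w,\infty)$; it satisfies (IC) if $\mathbb{E}_{a^*}[u(w(x^n))]-c(a^* )\ge \mathbb{E}_a[u(w(x^n))]-c(a)$ for all $a\in A$, and (IR) if $\mathbb{E}_{a^*}[u(w(x^n))]-c(a^* )\ge0$. The second-best cost $C^{\mathrm{SB}}_n(\mu,u,c,a^* )$ is the infimum of $\mathbb{E}_{a^*}[w(x^n)]$ over contracts satisfying (IC) and (IR); $C^{\mathrm{bin}}_n(\mu,u,c,a^* )$ is the same infimum restricted to binary contracts, i.e. those with $|w(X^n)|=2$. The first-best cost is $C^{\mathrm{FB}}(u,c,a^* )=h(c(a^* ))$. $A^-(c,a^* ):=\{a\in A:c(a)<c(a^* )\}$. For probability measures $\nu,\nu'$, $\mathrm{KL}(\nu,\nu')=\int\log\frac{d\nu}{d\nu'}\,d\nu$ if $\nu\ll\nu'$ and $+\infty$ otherwise. Notation: $f(n)=\exp[-rn+o(n)]$ means $\frac1n\log f(n)\to -r$ as $n\to\infty$. *)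

theory Defs
  imports "HOL-Probability.Probability"
begin

definition monitoring_tech ::
  "'x::euclidean_space set \<Rightarrow> ('a \<Rightarrow> 'x measure) \<Rightarrow> bool" where
  "monitoring_tech X \<mu> \<longleftrightarrow>
     (\<forall>a. prob_space (\<mu> a) \<and> space (\<mu> a) = X \<and> sets (\<mu> a) = sets (restrict_space borel X)) \<and>
     (\<forall>a a'. a \<noteq> a' \<longrightarrow> \<mu> a \<noteq> \<mu> a') \<and>
     (\<forall>a a'. absolutely_continuous (\<mu> a) (\<mu> a')) \<and>
     (\<forall>a a' (p::real). p > 0 \<longrightarrow>
        (\<integral>\<^sup>+ x. ennreal (enn2real (RN_deriv (\<mu> a) (\<mu> a') x) powr p) \<partial>\<mu> a) < \<infinity>)"

definition sig :: "('a \<Rightarrow> 'x measure) \<Rightarrow> 'a \<Rightarrow> nat \<Rightarrow> (nat \<Rightarrow> 'x) measure" where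
  "sig \<mu> a n = PiM {..<n} (\<lambda>_. \<mu> a)"

text \<open>Expectation of a function bounded below by lb, valued in (-\<infinity>, \<infinity>].\<close>
definition expect_lb :: "'b measure \<Rightarrow> ('b \<Rightarrow> real) \<Rightarrow> real \<Rightarrow> ereal" where
  "expect_lb M f lb = ereal lb + enn2ereal (\<integral>\<^sup>+ x. ennreal (f x - lb) \<partial>M)"

definition is_contract ::
  "('a \<Rightarrow> 'x measure) \<Rightarrow> 'a \<Rightarrow> real \<Rightarrow> nat \<Rightarrow> ((nat \<Rightarrow> 'x) \<Rightarrow> real) \<Rightarrow> bool" where
  "is_contract \<mu> ast wl n w \<longleftrightarrow>
     w \<in> borel_measurable (sig \<mu> ast n) \<and> (\<forall>x\<in>space (sig \<mu> ast n). w x \<ge> wl)"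

definition IC ::
  "('a \<Rightarrow> 'x measure) \<Rightarrow> (real \<Rightarrow> real) \<Rightarrow> ('a \<Rightarrow> real) \<Rightarrow> 'a \<Rightarrow> real \<Rightarrow> nat
     \<Rightarrow> ((nat \<Rightarrow> 'x) \<Rightarrow> real) \<Rightarrow> bool" where
  "IC \<mu> u c ast wl n w \<longleftrightarrow>
     (\<forall>a. expect_lb (sig \<mu> ast n) (u \<circ> w) (u wl) - ereal (c ast)
          \<ge> expect_lb (sig \<mu> a n) (u \<circ> w) (u wl) - ereal (c a))"

definition IR ::
  "('a \<Rightarrow> 'x measure) \<Rightarrow> (real \<Rightarrow> real) \<Rightarrow> ('a \<Rightarrow> real) \<Rightarrow> 'a \<Rightarrow> real \<Rightarrow> nat
     \<Rightarrow> ((nat \<Rightarrow> 'x) \<Rightarrow> real) \<Rightarrow> bool" where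
  "IR \<mu> u c ast wl n w \<longleftrightarrow>
     expect_lb (sig \<mu> ast n) (u \<circ> w) (u wl) - ereal (c ast) \<ge> 0"

definition C_SB ::
  "('a \<Rightarrow> 'x measure) \<Rightarrow> (real \<Rightarrow> real) \<Rightarrow> ('a \<Rightarrow> real) \<Rightarrow> 'a \<Rightarrow> real \<Rightarrow> nat \<Rightarrow> ereal" where
  "C_SB \<mu> u c ast wl n = Inf {expect_lb (sig \<mu> ast n) w wl | w.
      is_contract \<mu> ast wl n w \<and> IC \<mu> u c ast wl n w \<and> IR \<mu> u c ast wl n w}"

definition C_bin ::
  "('a \<Rightarrow> 'x measure) \<Rightarrow> (real \<Rightarrow> real) \<Rightarrow> ('a \<Rightarrow> real) \<Rightarrow> 'a \<Rightarrow> real \<Rightarrow> nat \<Rightarrow> ereal" where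
  "C_bin \<mu> u c ast wl n = Inf {expect_lb (sig \<mu> ast n) w wl | w.
      is_contract \<mu> ast wl n w \<and> card (w ` space (sig \<mu> ast n)) = 2 \<and>
      IC \<mu> u c ast wl n w \<and> IR \<mu> u c ast wl n w}"

definition C_FB :: "(real \<Rightarrow> real) \<Rightarrow> ('a \<Rightarrow> real) \<Rightarrow> 'a \<Rightarrow> real \<Rightarrow> real" where
  "C_FB u c ast wl = inv_into {wl..} u (c ast)"

definition A_minus :: "('a \<Rightarrow> real) \<Rightarrow> 'a \<Rightarrow> 'a set" where
  "A_minus c ast = {a. c a < c ast}"

text \<open>KL(mu_a, mu_a*) = integral over mu_a of log (d mu_a / d mu_a*)
  = KL_divergence (exp 1) (mu a*) (mu a) in the library's convention.\<close>

text \<open>f(n) = exp[-r n + o(n)]: f eventually positive and (1/n) log f(n) tends to -r.\<close>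
definition exp_rate :: "(nat \<Rightarrow> ereal) \<Rightarrow> real \<Rightarrow> bool" where
  "exp_rate f r \<longleftrightarrow> (\<forall>\<^sub>F n in sequentially. 0 < f n \<and> f n < \<infinity>) \<and>
     ((\<lambda>n. ln (real_of_ereal (f n)) / real n) \<longlonglongrightarrow> - r)"

end

(* Lower bound.  Let a be a cheaper action minimising KL(mu_a, mu_ast).  Incentive compatibility
   forces the expected utility under a to be lower by c(ast) - c(a).  After a change of measure this
   can only happen where the likelihood ratio of a against ast is large or where the wage falls
   short of its mean.  The likelihood ratio exceeds exp (n (KL + delta)) only with vanishing
   probability under mu_a (Chernoff), so the shortfall has second moment of order
   exp (- n (KL + delta)) under mu_ast, and strong concavity of u turns this second moment into a
   risk premium above the first-best wage.

   Upper bound.  Pay the lowest wage when, for some cheaper action a, the likelihood ratio exceeds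
   exp (n (KL(mu_a, mu_ast) - delta)), and otherwise a bonus chosen so that participation binds.
   Under ast this event has probability at most |A^-| exp (- n (r - delta)) (Markov), so the bonus
   exceeds the first-best wage by the same order; under every cheaper action the event has
   probability tending to one (Chernoff again), which makes all deviations unprofitable. *)
theory Submission
  imports Defs
begin

section \<open>Measure-theoretic and asymptotic preliminaries\<close>

lemma expect_lb_eq_integral:
  assumes "prob_space M" "f \<in> borel_measurable M" "\<forall>x\<in>space M. lb \<le> f x" "integrable M f"
  shows "expect_lb M f lb = ereal (integral\<^sup>L M f)"
proof -
  interpret prob_space M by fact
  have "(\<integral>\<^sup>+x. ennreal (f x - lb) \<partial>M) = ennreal (\<integral>x. f x - lb \<partial>M)"
    using assms by (intro nn_integral_eq_integral) (auto intro!: AE_I2)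
  moreover have "(\<integral>x. f x - lb \<partial>M) = integral\<^sup>L M f - lb"
    using assms(4) by (simp add: prob_space)
  moreover have "lb \<le> integral\<^sup>L M f"
    using assms by (intro integral_ge_const) (auto intro!: AE_I2)
  ultimately show ?thesis unfolding expect_lb_def by simp
qed

lemma integrable_if_expect_lb_finite:
  assumes "prob_space M" "f \<in> borel_measurable M" "\<forall>x\<in>space M. lb \<le> f x"
    and "expect_lb M f lb \<noteq> \<infinity>"
  shows "integrable M f"
proof -
  interpret prob_space M by fact
  have "(\<integral>\<^sup>+x. ennreal (f x - lb) \<partial>M) < \<infinity>"
    using assms(4) unfolding expect_lb_def by (auto simp: top_unique less_top)
  then have "integrable M (\<lambda>x. f x - lb)"
    using assms by (intro integrableI_nonneg) (auto intro!: AE_I2)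
  then have "integrable M (\<lambda>x. (f x - lb) + lb)"
    by (intro Bochner_Integration.integrable_add) auto
  then show ?thesis by simp
qed

lemma expect_lb_binary:
  assumes "prob_space M" "E \<in> sets M" "lo \<le> hi"
  shows "expect_lb M (\<lambda>x. if x \<in> E then lo else hi) lo = ereal (lo + (hi - lo) * measure M (space M - E))"
proof -
  interpret prob_space M by fact
  have "(\<integral>\<^sup>+x. ennreal ((if x \<in> E then lo else hi) - lo) \<partial>M)
      = (\<integral>\<^sup>+x. ennreal (hi - lo) * indicator (space M - E) x \<partial>M)"
    by (intro nn_integral_cong) (auto simp: indicator_def)
  also have "\<dots> = ennreal ((hi - lo) * measure M (space M - E))"
    using assms by (simp add: nn_integral_cmult_indicator emeasure_eq_measure ennreal_mult)
  finally show ?thesis unfolding expect_lb_def using assms(3) by simp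
qed

lemma PiM_density:
  assumes "finite I" "sigma_finite_measure M" "sigma_finite_measure (density M f)"
    and [measurable]: "f \<in> borel_measurable M"
  shows "PiM I (\<lambda>_. density M f) = density (PiM I (\<lambda>_. M)) (\<lambda>x. \<Prod>i\<in>I. f (x i))"
proof -
  interpret D: product_sigma_finite "\<lambda>_. density M f"
    using assms by (simp add: product_sigma_finite_def)
  interpret P: product_sigma_finite "\<lambda>_. M"
    using assms by (simp add: product_sigma_finite_def)
  show ?thesis
  proof (rule D.PiM_eqI[OF \<open>finite I\<close>, symmetric])
    show "sets (density (PiM I (\<lambda>_. M)) (\<lambda>x. \<Prod>i\<in>I. f (x i))) = sets (PiM I (\<lambda>_. density M f))"
      unfolding sets_density by (rule sets_PiM_cong) simp_all
  next
    fix A assume "\<And>i. i \<in> I \<Longrightarrow> A i \<in> sets (density M f)"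
    then have A: "\<And>i. i \<in> I \<Longrightarrow> A i \<in> sets M" by simp
    have "(\<Prod>i\<in>I. f (x i)) * indicator (Pi\<^sub>E I A) x = (\<Prod>i\<in>I. f (x i) * indicator (A i) (x i))"
      if x: "x \<in> extensional I" for x
    proof (cases "x \<in> Pi\<^sub>E I A")
      case False
      then obtain i where "i \<in> I" "x i \<notin> A i" using x by (auto simp: PiE_iff)
      then have "(\<Prod>i\<in>I. f (x i) * indicator (A i) (x i)) = 0"
        using \<open>finite I\<close> by (intro prod_zero bexI[of _ i]) auto
      then show ?thesis using False by simp
    qed (auto simp: prod.distrib PiE_iff)
    moreover have "Pi\<^sub>E I A \<in> sets (PiM I (\<lambda>_. M))"
      using A assms by (intro sets_PiM_I_finite) auto
    ultimately have "emeasure (density (PiM I (\<lambda>_. M)) (\<lambda>x. \<Prod>i\<in>I. f (x i))) (Pi\<^sub>E I A)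
        = (\<integral>\<^sup>+x. (\<Prod>i\<in>I. f (x i) * indicator (A i) (x i)) \<partial>PiM I (\<lambda>_. M))"
      by (subst emeasure_density) (auto simp: space_PiM PiE_def intro!: nn_integral_cong)
    also have "\<dots> = (\<Prod>i\<in>I. emeasure (density M f) (A i))"
      using A \<open>finite I\<close> by (subst P.product_nn_integral_prod) (auto intro!: prod.cong simp: emeasure_density)
    finally show "emeasure (density (PiM I (\<lambda>_. M)) (\<lambda>x. \<Prod>i\<in>I. f (x i))) (Pi\<^sub>E I A)
        = (\<Prod>i\<in>I. emeasure (density M f) (A i))" .
  qed
qed

lemma measure_PiM_prod_ge_le:
  assumes "prob_space M" "integrable M f" "\<And>x. 0 \<le> f x" "0 < T"
  shows "measure (PiM {..<n} (\<lambda>_. M)) {x\<in>space (PiM {..<n} (\<lambda>_. M)). T \<le> (\<Prod>i<n. f (x i))}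
           \<le> (integral\<^sup>L M f) ^ n / T"
proof -
  interpret P: product_sigma_finite "\<lambda>_. M"
    using assms by (simp add: product_sigma_finite_def prob_space_imp_sigma_finite)
  have "integrable (PiM {..<n} (\<lambda>_. M)) (\<lambda>x. \<Prod>i<n. f (x i))"
    using assms by (intro P.product_integrable_prod) auto
  then have "measure (PiM {..<n} (\<lambda>_. M)) {x\<in>space (PiM {..<n} (\<lambda>_. M)). T \<le> (\<Prod>i<n. f (x i))}
      \<le> (\<integral>x. (\<Prod>i<n. f (x i)) \<partial>PiM {..<n} (\<lambda>_. M)) / T"
    using assms by (intro integral_Markov_inequality_measure[where A = "{}"]) (auto intro: prod_nonneg)
  also have "(\<integral>x. (\<Prod>i<n. f (x i)) \<partial>PiM {..<n} (\<lambda>_. M)) = (integral\<^sup>L M f) ^ n"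
    using assms by (subst P.product_integral_prod) auto
  finally show ?thesis .
qed

lemma integrable_probability_density:
  assumes "prob_space (density P \<Lambda>)" "\<Lambda> \<in> borel_measurable P" "\<And>x. 0 \<le> \<Lambda> x"
  shows "integrable P \<Lambda>" "integral\<^sup>L P \<Lambda> = 1"
proof -
  interpret Pa: prob_space "density P \<Lambda>" by fact
  have "integrable (density P \<Lambda>) (\<lambda>_. 1::real)"
    by simp
  then show "integrable P \<Lambda>"
    using assms by (subst (asm) integrable_real_density) auto
  have "(\<integral>x. 1 \<partial>density P \<Lambda>) = (1::real)"
    using Pa.prob_space by simp
  then show "integral\<^sup>L P \<Lambda> = 1"
    using assms by (subst (asm) integral_real_density) auto
qed

lemma measure_density_eq_integral:
  assumes "prob_space (density P \<Lambda>)" "\<Lambda> \<in> borel_measurable P" "\<And>x. 0 \<le> \<Lambda> x" "G \<in> sets P"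
  shows "measure (density P \<Lambda>) G = (\<integral>x. \<Lambda> x * indicator G x \<partial>P)"
proof -
  interpret prob_space "density P \<Lambda>" by fact
  have "measure (density P \<Lambda>) G = (\<integral>x. indicator G x \<partial>density P \<Lambda>)"
    using assms by simp
  also have "\<dots> = (\<integral>x. \<Lambda> x * indicator G x \<partial>P)"
    using assms by (subst integral_density) auto
  finally show ?thesis .
qed

lemma integrable_of_exp_moments:
  fixes g :: "'b \<Rightarrow> real"
  assumes "g \<in> borel_measurable M" "integrable M (\<lambda>x. exp (g x))" "integrable M (\<lambda>x. exp (- g x))"
  shows "integrable M g"
proof (rule Bochner_Integration.integrable_bound[of _ "\<lambda>x. exp (g x) + exp (- g x)"])
  have "\<bar>y\<bar> \<le> exp y + exp (- y)" for y :: real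
    using exp_ge_add_one_self[of y] exp_ge_add_one_self[of "- y"] exp_gt_zero[of y] exp_gt_zero[of "- y"]
    by (cases "0 \<le> y") linarith+
  then show "AE x in M. norm (g x) \<le> norm (exp (g x) + exp (- g x))"
    by (intro AE_I2) (simp add: add_pos_pos)
qed (use assms in auto)

lemma exp_le_second_order:
  fixes l g :: real
  assumes "0 < l" "l \<le> 1"
  shows "exp (l * g) \<le> 1 + l * g + l\<^sup>2 * (exp (2 * g) + exp (- 2 * g))"
proof -
  obtain t where t: "\<bar>t\<bar> \<le> \<bar>l * g\<bar>"
    "exp (l * g) = (\<Sum>m<2. (l * g) ^ m / fact m) + exp t / fact 2 * (l * g)\<^sup>2"
    using Maclaurin_exp_le[of "l * g" 2] by blast
  have "\<bar>l * g\<bar> \<le> \<bar>g\<bar>"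
    using assms by (simp add: abs_mult mult_left_le_one_le)
  then have "exp t \<le> exp \<bar>g\<bar>"
    using t(1) by simp
  moreover have "g\<^sup>2 \<le> 2 * exp \<bar>g\<bar>"
  proof -
    have "1 + \<bar>g\<bar> + \<bar>g\<bar>\<^sup>2 / 2 \<le> exp \<bar>g\<bar>"
      by (rule exp_lower_Taylor_quadratic) simp
    moreover have "\<bar>g\<bar>\<^sup>2 = g\<^sup>2" by simp
    ultimately show ?thesis by linarith
  qed
  ultimately have "exp t * g\<^sup>2 \<le> exp \<bar>g\<bar> * (2 * exp \<bar>g\<bar>)"
    by (intro mult_mono) auto
  also have "\<dots> = 2 * exp (2 * \<bar>g\<bar>)"
    by (metis exp_add mult_2 mult.left_commute)
  also have "exp (2 * \<bar>g\<bar>) \<le> exp (2 * g) + exp (- 2 * g)"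
    by (cases "0 \<le> g") simp_all
  finally have "l\<^sup>2 * (exp t * g\<^sup>2 / 2) \<le> l\<^sup>2 * (exp (2 * g) + exp (- 2 * g))"
    by (intro mult_left_mono) auto
  moreover have "exp t / fact 2 * (l * g)\<^sup>2 = l\<^sup>2 * (exp t * g\<^sup>2 / 2)"
    by (simp add: power_mult_distrib)
  moreover have "(\<Sum>m<2. (l * g) ^ m / fact m) = 1 + l * g"
    by (simp add: numeral_2_eq_2)
  ultimately show ?thesis
    using t(2) by linarith
qed

lemma mgf_le_exp_mean:
  fixes g :: "'b \<Rightarrow> real"
  assumes "prob_space M" and [measurable]: "g \<in> borel_measurable M"
    and moments: "\<And>s. integrable M (\<lambda>x. exp (s * g x))" and "0 < \<delta>"
  shows "\<exists>l>0. (\<integral>x. exp (l * g x) \<partial>M) \<le> exp (l * ((\<integral>x. g x \<partial>M) + \<delta>))"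
proof -
  interpret prob_space M by fact
  define h where "h x = exp (2 * g x) + exp (- 2 * g x)" for x
  have int_h: "integrable M h"
    unfolding h_def using moments[of 2] moments[of "- 2"] by auto
  have int_g: "integrable M g"
    by (rule integrable_of_exp_moments) (use moments[of 1] moments[of "- 1"] in simp_all)
  define A where "A = integral\<^sup>L M h"
  have "0 \<le> A" unfolding A_def h_def by (intro integral_nonneg_AE) auto
  define l where "l = min 1 (\<delta> / (A + 1))"
  have l: "0 < l" "l \<le> 1" "l * A \<le> \<delta>"
    using \<open>0 \<le> A\<close> \<open>0 < \<delta>\<close> by (auto simp: l_def min_def field_simps)
  have "exp (l * g x) \<le> 1 + l * g x + l\<^sup>2 * h x" for x
    using exp_le_second_order[OF l(1,2), of "g x"] by (simp add: h_def)
  then have "(\<integral>x. exp (l * g x) \<partial>M) \<le> (\<integral>x. 1 + l * g x + l\<^sup>2 * h x \<partial>M)"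
    using int_g int_h moments[of l] by (intro integral_mono) auto
  also have "\<dots> = 1 + l * (\<integral>x. g x \<partial>M) + l * (l * A)"
    using int_g int_h by (simp add: A_def power2_eq_square prob_space)
  also have "\<dots> \<le> 1 + l * ((\<integral>x. g x \<partial>M) + \<delta>)"
    using l by (simp add: distrib_left)
  also have "\<dots> \<le> exp (l * ((\<integral>x. g x \<partial>M) + \<delta>))"
    by (rule exp_ge_add_one_self)
  finally show ?thesis using l by blast
qed

lemma exp_neg_mult_tendsto_zero:
  assumes "0 < s"
  shows "(\<lambda>n. exp (- real n * s)) \<longlonglongrightarrow> 0"
proof -
  have "(\<lambda>n. exp (- s) ^ n) \<longlonglongrightarrow> 0"
    using assms by (intro LIMSEQ_power_zero) auto
  then show ?thesis
    by (simp add: exp_of_nat_mult[symmetric] mult.commute)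
qed

lemma Chernoff_tendsto_zero:
  fixes g :: "'b \<Rightarrow> real"
  assumes "prob_space M" and [measurable]: "g \<in> borel_measurable M"
    and moments: "\<And>s. integrable M (\<lambda>x. exp (s * g x))" and "0 < \<delta>"
  shows "(\<lambda>n. measure (PiM {..<n} (\<lambda>_. M))
           {x\<in>space (PiM {..<n} (\<lambda>_. M)). real n * ((\<integral>x. g x \<partial>M) + \<delta>) \<le> (\<Sum>i<n. g (x i))})
         \<longlonglongrightarrow> 0"
proof -
  define m where "m = (\<integral>x. g x \<partial>M)"
  obtain l where l: "0 < l" "(\<integral>x. exp (l * g x) \<partial>M) \<le> exp (l * (m + \<delta> / 2))"
    using mgf_le_exp_mean[OF assms(1,2) moments, of "\<delta> / 2"] \<open>0 < \<delta>\<close> by (auto simp: m_def)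
  have bound: "measure (PiM {..<n} (\<lambda>_. M))
      {x\<in>space (PiM {..<n} (\<lambda>_. M)). real n * (m + \<delta>) \<le> (\<Sum>i<n. g (x i))} \<le> exp (- l * \<delta> / 2) ^ n"
    for n
  proof -
    have "real n * (m + \<delta>) \<le> (\<Sum>i<n. g (x i)) \<longleftrightarrow>
        exp (l * (real n * (m + \<delta>))) \<le> (\<Prod>i<n. exp (l * g (x i)))" for x
      using \<open>0 < l\<close> by (simp add: mult_le_cancel_left_pos flip: exp_sum sum_distrib_left)
    then have "measure (PiM {..<n} (\<lambda>_. M))
        {x\<in>space (PiM {..<n} (\<lambda>_. M)). real n * (m + \<delta>) \<le> (\<Sum>i<n. g (x i))}
        \<le> (\<integral>x. exp (l * g x) \<partial>M) ^ n / exp (l * (real n * (m + \<delta>)))"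
      by (simp add: measure_PiM_prod_ge_le[OF assms(1) moments[of l]])
    also have "\<dots> \<le> exp (l * (m + \<delta> / 2)) ^ n / exp (l * (real n * (m + \<delta>)))"
      using l by (intro divide_right_mono power_mono integral_nonneg_AE) auto
    also have "\<dots> = exp (- l * \<delta> / 2) ^ n"
      by (simp add: field_simps flip: exp_of_nat_mult exp_add exp_diff)
    finally show ?thesis .
  qed
  have geometric: "(\<lambda>n. exp (- l * \<delta> / 2) ^ n) \<longlonglongrightarrow> 0"
    using l \<open>0 < \<delta>\<close> by (intro LIMSEQ_power_zero) auto
  show ?thesis
    unfolding m_def[symmetric]
    by (rule tendsto_sandwich[OF _ _ tendsto_const geometric]) (use bound in auto)
qed

lemma mult_le_AM_GM_truncated:
  fixes l d y M K t :: real
  assumes "0 \<le> l" "0 \<le> d" "d \<le> M" "d \<le> y" "0 < t" "0 < K"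
  shows "l * d \<le> t / 2 * y\<^sup>2 + K / (2 * t) * l + M * (if K \<le> l then l else 0)"
proof (cases "K \<le> l")
  case True
  have "l * d \<le> M * l"
    using mult_right_mono[of d M l] assms by (simp add: mult.commute)
  moreover have "0 \<le> t / 2 * y\<^sup>2" "0 \<le> K / (2 * t) * l"
    using assms by simp_all
  ultimately show ?thesis
    using True by simp
next
  case False
  have "l * d \<le> l * y"
    using assms by (simp add: mult_left_mono)
  also have "\<dots> \<le> t / 2 * y\<^sup>2 + l\<^sup>2 / (2 * t)"
    using assms sum_squares_bound[of "t * y" l] by (simp add: field_simps power2_eq_square)
  also have "l\<^sup>2 / (2 * t) \<le> K / (2 * t) * l"
    using assms False by (simp add: power2_eq_square field_simps mult_right_mono)
  finally show ?thesis
    using False by simp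
qed

lemma second_moment_lower_bound:
  fixes \<Lambda> D Y :: "'b \<Rightarrow> real"
  assumes "prob_space (density P \<Lambda>)"
    and [measurable]: "\<Lambda> \<in> borel_measurable P" "D \<in> borel_measurable P"
    and \<Lambda>_nonneg: "\<And>x. 0 \<le> \<Lambda> x"
    and D: "\<And>x. x \<in> space P \<Longrightarrow> 0 \<le> D x \<and> D x \<le> M \<and> D x \<le> Y x"
    and Y2: "integrable P (\<lambda>x. (Y x)\<^sup>2)" and "0 < K" "0 < \<Delta>"
    and mean: "\<Delta> \<le> (\<integral>x. D x \<partial>density P \<Lambda>)"
    and tail: "M * measure (density P \<Lambda>) {x\<in>space P. K \<le> \<Lambda> x} \<le> \<Delta> / 2"
  shows "\<Delta>\<^sup>2 \<le> 4 * K * (\<integral>x. (Y x)\<^sup>2 \<partial>P)"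
proof -
  interpret Pa: prob_space "density P \<Lambda>" by fact
  define G where "G = {x\<in>space P. K \<le> \<Lambda> x}"
  have "G \<in> sets P" unfolding G_def by measurable
  note \<Lambda> = integrable_probability_density[OF assms(1,2) \<Lambda>_nonneg]
  have int_\<Lambda>G: "integrable P (\<lambda>x. \<Lambda> x * indicator G x)"
    using integrable_mult_indicator[OF \<open>G \<in> sets P\<close> \<Lambda>(1)] by (simp add: mult.commute)
  have "integrable (density P \<Lambda>) D"
    by (rule Pa.integrable_const_bound[of _ M]) (use D in auto)
  then have int_\<Lambda>D: "integrable P (\<lambda>x. \<Lambda> x * D x)"
    using \<Lambda>_nonneg by (simp add: integrable_density)
  define t where "t = 2 * K / \<Delta>"
  have "0 < t" using \<open>0 < K\<close> \<open>0 < \<Delta>\<close> by (simp add: t_def)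
  have pointwise: "\<Lambda> x * D x \<le> t / 2 * (Y x)\<^sup>2 + K / (2 * t) * \<Lambda> x + M * (\<Lambda> x * indicator G x)"
    if "x \<in> space P" for x
  proof -
    have "\<Lambda> x * indicator G x = (if K \<le> \<Lambda> x then \<Lambda> x else 0)"
      using that by (simp add: G_def)
    then show ?thesis
      using mult_le_AM_GM_truncated[of "\<Lambda> x" "D x" M "Y x" t K] D[OF that] \<Lambda>_nonneg \<open>0 < t\<close> \<open>0 < K\<close>
      by simp
  qed
  have "\<Delta> \<le> (\<integral>x. \<Lambda> x * D x \<partial>P)"
    using mean \<Lambda>_nonneg by (simp add: integral_density)
  also have "\<dots> \<le> (\<integral>x. t / 2 * (Y x)\<^sup>2 + K / (2 * t) * \<Lambda> x + M * (\<Lambda> x * indicator G x) \<partial>P)"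
    using int_\<Lambda>D Y2 \<Lambda>(1) int_\<Lambda>G pointwise by (intro integral_mono) auto
  also have "\<dots> = t / 2 * (\<integral>x. (Y x)\<^sup>2 \<partial>P) + K / (2 * t) + M * measure (density P \<Lambda>) G"
    using Y2 \<Lambda> int_\<Lambda>G measure_density_eq_integral[OF assms(1,2) \<Lambda>_nonneg \<open>G \<in> sets P\<close>] by simp
  also have "\<dots> \<le> K / \<Delta> * (\<integral>x. (Y x)\<^sup>2 \<partial>P) + \<Delta> / 4 + \<Delta> / 2"
    using tail \<open>0 < \<Delta>\<close> \<open>0 < K\<close> by (simp add: t_def G_def)
  finally show ?thesis
    using \<open>0 < \<Delta>\<close> by (simp add: field_simps power2_eq_square)
qed

lemma integrable_shortfall_sq:
  fixes w :: "'b \<Rightarrow> real"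
  assumes "finite_measure P" "w \<in> borel_measurable P" "\<forall>x\<in>space P. lb \<le> w x"
  shows "integrable P (\<lambda>x. (max 0 (W - w x))\<^sup>2)"
proof (rule finite_measure.integrable_const_bound[OF assms(1), of _ "(max 0 (W - lb))\<^sup>2"])
  show "AE x in P. norm ((max 0 (W - w x))\<^sup>2) \<le> (max 0 (W - lb))\<^sup>2"
    using assms(3) by (intro AE_I2) (auto intro!: power_mono)
qed (use assms(2) in measurable)

lemma integral_pos_part_ge:
  fixes v :: "'b \<Rightarrow> real"
  assumes "prob_space M" "integrable M v"
  shows "a - (\<integral>x. v x \<partial>M) \<le> (\<integral>x. max 0 (a - v x) \<partial>M)"
proof -
  interpret prob_space M by fact
  have "a - (\<integral>x. v x \<partial>M) = (\<integral>x. a - v x \<partial>M)"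
    using assms(2) prob_space by simp
  also have "\<dots> \<le> (\<integral>x. max 0 (a - v x) \<partial>M)"
    using assms(2) by (intro integral_mono integrable_max) auto
  finally show ?thesis .
qed

lemma gap_from_second_moment:
  fixes \<Delta> K L Q \<kappa> a g :: real
  assumes "\<Delta>\<^sup>2 \<le> 4 * K * (L\<^sup>2 * Q)" "\<kappa> / 2 * Q \<le> a * g" "0 < \<kappa>" "0 < K" "0 < a" "0 < L"
  shows "\<kappa> * \<Delta>\<^sup>2 / (8 * a * L\<^sup>2 * K) \<le> g"
proof -
  have "\<kappa> * \<Delta>\<^sup>2 \<le> \<kappa> * (4 * K * (L\<^sup>2 * Q))"
    using assms by (intro mult_left_mono) auto
  also have "\<dots> = 8 * K * L\<^sup>2 * (\<kappa> / 2 * Q)"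
    by simp
  also have "\<dots> \<le> 8 * K * L\<^sup>2 * (a * g)"
    using assms by (intro mult_left_mono) auto
  finally show ?thesis
    using assms by (simp add: pos_divide_le_eq algebra_simps)
qed

lemma binary_utility_levels:
  fixes uL cs p :: real
  assumes "uL < cs" "0 \<le> p" "p \<le> 1 / 2"
  defines "uH \<equiv> cs + (cs - uL) * p / (1 - p)"
  shows "uL + (uH - uL) * (1 - p) = cs" "cs \<le> uH" "uH \<le> cs + 2 * (cs - uL) * p"
proof -
  show "uL + (uH - uL) * (1 - p) = cs"
    using assms by (simp add: uH_def field_simps)
  show "cs \<le> uH"
    using assms by (simp add: uH_def)
  have "p * (2 * p) \<le> p * 1"
    using assms by (intro mult_left_mono) auto
  then have "p / (1 - p) \<le> 2 * p"
    using assms by (simp add: divide_le_eq algebra_simps)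
  then have "(cs - uL) * (p / (1 - p)) \<le> (cs - uL) * (2 * p)"
    using assms by (intro mult_left_mono) auto
  then show "uH \<le> cs + 2 * (cs - uL) * p"
    by (simp add: uH_def algebra_simps)
qed

lemma card_image_binary:
  assumes "E \<subseteq> S" "E \<noteq> {}" "S - E \<noteq> {}" "a \<noteq> b"
  shows "card ((\<lambda>x. if x \<in> E then a else b) ` S) = 2"
proof -
  have "(\<lambda>x. if x \<in> E then a else b) ` S = {a, b}"
    using assms by auto
  then show ?thesis using \<open>a \<noteq> b\<close> by simp
qed

lemma ln_div_tendsto: "(\<lambda>n. ln C / real n - s) \<longlonglongrightarrow> - s"
  using tendsto_divide_0[OF tendsto_const filterlim_at_top_imp_at_infinity[OF filterlim_real_sequentially]]
  by (intro tendsto_eq_intros) auto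

lemma eventually_ln_div_gt:
  fixes y :: "nat \<Rightarrow> real"
  assumes "0 < C" "a < - s" and lower: "\<forall>\<^sub>F n in sequentially. C * exp (- real n * s) \<le> y n"
  shows "\<forall>\<^sub>F n in sequentially. a < ln (y n) / real n"
  using order_tendstoD(1)[OF ln_div_tendsto \<open>a < - s\<close>, of C] lower eventually_gt_at_top[of 0]
proof eventually_elim
  case (elim n)
  have "ln C - real n * s \<le> ln (y n)"
    using \<open>0 < C\<close> ln_mono[OF elim(2)] by (simp add: ln_mult)
  then have "(ln C - real n * s) / n \<le> ln (y n) / n"
    using elim(3) by (intro divide_right_mono) auto
  then show ?case
    using elim(1,3) by (simp add: diff_divide_distrib)
qed

lemma eventually_ln_div_lt:
  fixes y :: "nat \<Rightarrow> real"
  assumes "0 < C" "- s < b" and upper: "\<forall>\<^sub>F n in sequentially. 0 < y n \<and> y n \<le> C * exp (- real n * s)"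
  shows "\<forall>\<^sub>F n in sequentially. ln (y n) / real n < b"
  using order_tendstoD(2)[OF ln_div_tendsto \<open>- s < b\<close>, of C] upper eventually_gt_at_top[of 0]
proof eventually_elim
  case (elim n)
  have "ln (y n) \<le> ln (C * exp (- real n * s))"
    using elim(2) by (intro ln_mono) auto
  then have "ln (y n) \<le> ln C - real n * s"
    using \<open>0 < C\<close> by (simp add: ln_mult)
  then have "ln (y n) / n \<le> (ln C - real n * s) / n"
    using elim(3) by (intro divide_right_mono) auto
  then show ?case
    using elim(1,3) by (simp add: diff_divide_distrib)
qed

lemma real_of_ereal_between:
  assumes "0 < a" "ereal a \<le> x" "x \<le> ereal b"
  shows "0 < x \<and> x < \<infinity> \<and> 0 < real_of_ereal x \<and> a \<le> real_of_ereal x \<and> real_of_ereal x \<le> b"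
  using assms by (cases x) auto

lemma exp_rate_sandwich:
  fixes f :: "nat \<Rightarrow> ereal"
  assumes "0 < \<delta>0"
    and bounds: "\<And>\<delta>. 0 < \<delta> \<Longrightarrow> \<delta> < \<delta>0 \<Longrightarrow> \<exists>C1>0. \<exists>C2>0. \<forall>\<^sub>F n in sequentially.
        ereal (C1 * exp (- real n * (r + \<delta>))) \<le> f n \<and> f n \<le> ereal (C2 * exp (- real n * (r - \<delta>)))"
  shows "exp_rate f r"
  unfolding exp_rate_def
proof
  obtain C1 C2 where "0 < C1" and "\<forall>\<^sub>F n in sequentially.
      ereal (C1 * exp (- real n * (r + \<delta>0 / 2))) \<le> f n \<and> f n \<le> ereal (C2 * exp (- real n * (r - \<delta>0 / 2)))"
    using bounds[of "\<delta>0 / 2"] \<open>0 < \<delta>0\<close> by auto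
  then show "\<forall>\<^sub>F n in sequentially. 0 < f n \<and> f n < \<infinity>"
    by (auto elim!: eventually_mono dest!: real_of_ereal_between[rotated])
  show "(\<lambda>n. ln (real_of_ereal (f n)) / real n) \<longlonglongrightarrow> - r"
  proof (rule order_tendstoI)
    fix a assume "a < - r"
    then obtain \<delta> where "0 < \<delta>" "\<delta> < \<delta>0" "a < - (r + \<delta>)"
      using \<open>0 < \<delta>0\<close> by (intro that[of "min (\<delta>0 / 2) ((- r - a) / 2)"]) (auto simp: min_def field_simps)
    with bounds obtain C1 C2 where "0 < C1" and bnd: "\<forall>\<^sub>F n in sequentially.
        ereal (C1 * exp (- real n * (r + \<delta>))) \<le> f n \<and> f n \<le> ereal (C2 * exp (- real n * (r - \<delta>)))"
      by blast
    show "\<forall>\<^sub>F n in sequentially. a < ln (real_of_ereal (f n)) / real n"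
      by (rule eventually_ln_div_gt[OF \<open>0 < C1\<close> \<open>a < - (r + \<delta>)\<close>])
        (use bnd \<open>0 < C1\<close> in \<open>auto elim!: eventually_mono dest!: real_of_ereal_between[rotated]\<close>)
  next
    fix b assume "- r < b"
    then obtain \<delta> where "0 < \<delta>" "\<delta> < \<delta>0" "- (r - \<delta>) < b"
      using \<open>0 < \<delta>0\<close> by (intro that[of "min (\<delta>0 / 2) ((b + r) / 2)"]) (auto simp: min_def field_simps)
    with bounds obtain C1 C2 where "0 < C1" "0 < C2" and bnd: "\<forall>\<^sub>F n in sequentially.
        ereal (C1 * exp (- real n * (r + \<delta>))) \<le> f n \<and> f n \<le> ereal (C2 * exp (- real n * (r - \<delta>)))"
      by blast
    show "\<forall>\<^sub>F n in sequentially. ln (real_of_ereal (f n)) / real n < b"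
      by (rule eventually_ln_div_lt[OF \<open>0 < C2\<close> \<open>- (r - \<delta>) < b\<close>])
        (use bnd \<open>0 < C1\<close> in \<open>auto elim!: eventually_mono dest!: real_of_ereal_between[rotated]\<close>)
  qed
qed

section \<open>Concave utility\<close>

locale concave_utility =
  fixes u u' u'' :: "real \<Rightarrow> real" and wl :: real
  assumes u_deriv_within: "\<And>w. wl \<le> w \<Longrightarrow> (u has_real_derivative u' w) (at w within {wl..})"
    and u'_deriv_within: "\<And>w. wl \<le> w \<Longrightarrow> (u' has_real_derivative u'' w) (at w within {wl..})"
    and u'_pos: "\<And>w. wl \<le> w \<Longrightarrow> 0 < u' w"
    and u''_neg: "\<And>w. wl \<le> w \<Longrightarrow> u'' w < 0"
    and u''_continuous: "continuous_on {wl..} u''"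
begin

lemma u_deriv: "wl < w \<Longrightarrow> (u has_real_derivative u' w) (at w)"
  using u_deriv_within[of w] by (simp add: at_within_interior[of w "{wl..}"])

lemma u'_deriv: "wl < w \<Longrightarrow> (u' has_real_derivative u'' w) (at w)"
  using u'_deriv_within[of w] by (simp add: at_within_interior[of w "{wl..}"])

lemma continuous_on_u: "continuous_on {wl..} u"
  using u_deriv_within by (auto simp: continuous_on_eq_continuous_within intro: DERIV_continuous)

lemma continuous_on_u': "continuous_on {wl..} u'"
  using u'_deriv_within by (auto simp: continuous_on_eq_continuous_within intro: DERIV_continuous)

lemma u_strict_mono:
  assumes "wl \<le> x" "x < y"
  shows "u x < u y"
proof (rule DERIV_pos_imp_increasing_open[OF \<open>x < y\<close>])
  fix t assume "x < t" "t < y"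
  then show "\<exists>d. (u has_real_derivative d) (at t) \<and> 0 < d"
    using assms by (intro exI[of _ "u' t"]) (auto intro: u_deriv u'_pos)
qed (use assms in \<open>auto intro: continuous_on_subset[OF continuous_on_u]\<close>)

lemma u_mono: "wl \<le> x \<Longrightarrow> x \<le> y \<Longrightarrow> u x \<le> u y"
  by (cases "x < y") (simp_all add: less_imp_le u_strict_mono)

lemma u'_decrease:
  assumes "wl \<le> x" "x \<le> y" and curv: "\<forall>t\<in>{x..y}. u'' t \<le> - \<kappa>"
  shows "u' y + \<kappa> * (y - x) \<le> u' x"
proof -
  have "u' y + \<kappa> * y \<le> u' x + \<kappa> * x"
  proof (rule DERIV_nonpos_imp_decreasing_open[OF \<open>x \<le> y\<close>, of "\<lambda>t. u' t + \<kappa> * t"])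
    fix t assume t: "x < t" "t < y"
    have "((\<lambda>t. u' t + \<kappa> * t) has_real_derivative u'' t + \<kappa>) (at t)"
      using t assms by (auto intro!: derivative_eq_intros u'_deriv)
    moreover have "u'' t + \<kappa> \<le> 0"
      using bspec[OF curv, of t] t by simp
    ultimately show "\<exists>d. ((\<lambda>t. u' t + \<kappa> * t) has_real_derivative d) (at t) \<and> d \<le> 0"
      by blast
  qed (use assms in \<open>auto intro!: continuous_intros continuous_on_subset[OF continuous_on_u']\<close>)
  then show ?thesis by (simp add: algebra_simps)
qed

lemma u'_antimono:
  assumes "wl \<le> x" "x \<le> y"
  shows "u' y \<le> u' x"
  using u'_decrease[OF assms, of 0] assms u''_neg by (simp add: less_imp_le)

lemma u_le_tangent_minus_quadratic:
  assumes "wl \<le> x" "wl \<le> y" and curv: "\<forall>t\<in>{min x y..max x y}. u'' t \<le> - \<kappa>"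
  shows "u y \<le> u x + u' x * (y - x) - \<kappa> / 2 * (y - x)\<^sup>2"
proof -
  define h where "h t = u x + u' x * (t - x) - \<kappa> / 2 * (t - x)\<^sup>2 - u t" for t
  have dh: "(h has_real_derivative u' x - \<kappa> * (t - x) - u' t) (at t)" if "wl < t" for t
    unfolding h_def using that
    by (auto intro!: derivative_eq_intros u_deriv simp: algebra_simps power2_eq_square)
  have ch: "continuous_on {wl..} h"
    unfolding h_def by (intro continuous_intros continuous_on_u)
  have "h x \<le> h y"
  proof (cases "x \<le> y")
    case True
    show ?thesis
    proof (rule DERIV_nonneg_imp_increasing_open[OF True])
      fix t assume t: "x < t" "t < y"
      have "u' t + \<kappa> * (t - x) \<le> u' x"
        using t assms by (intro u'_decrease) auto
      then show "\<exists>d. (h has_real_derivative d) (at t) \<and> 0 \<le> d"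
        using t assms by (intro exI[of _ "u' x - \<kappa> * (t - x) - u' t"] conjI dh) auto
    qed (use assms in \<open>auto intro!: continuous_on_subset[OF ch]\<close>)
  next
    case False
    show ?thesis
    proof (rule DERIV_nonpos_imp_decreasing_open[of y x])
      fix t assume t: "y < t" "t < x"
      have "u' x + \<kappa> * (x - t) \<le> u' t"
        using t assms False by (intro u'_decrease) auto
      then show "\<exists>d. (h has_real_derivative d) (at t) \<and> d \<le> 0"
        using t assms by (intro exI[of _ "u' x - \<kappa> * (t - x) - u' t"] conjI dh) (auto simp: algebra_simps)
    qed (use assms False in \<open>auto intro!: continuous_on_subset[OF ch]\<close>)
  qed
  then show ?thesis by (simp add: h_def)
qed

lemma u_le_tangent:
  assumes "wl \<le> x" "wl \<le> y"
  shows "u y \<le> u x + u' x * (y - x)"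
proof (rule u_le_tangent_minus_quadratic[OF assms, of 0, simplified])
  show "\<forall>t\<in>{min x y..max x y}. u'' t \<le> 0"
    using assms by (auto intro!: less_imp_le[OF u''_neg])
qed

lemma u_increment_le:
  assumes "wl \<le> x" "x \<le> y"
  shows "u y - u x \<le> u' wl * (y - x)"
proof -
  have "u' x * (y - x) \<le> u' wl * (y - x)"
    using assms u'_antimono[of wl x] by (intro mult_right_mono) auto
  then show ?thesis using u_le_tangent[of x y] assms by linarith
qed

lemma u_increment_ge:
  assumes "wl \<le> x" "x \<le> y" "y \<le> B"
  shows "u' B * (y - x) \<le> u y - u x"
proof -
  have "u' B * (y - x) \<le> u' y * (y - x)"
    using assms u'_antimono[of y B] by (intro mult_right_mono) auto
  then show ?thesis using u_le_tangent[of y x] assms by (simp add: algebra_simps)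
qed

lemma u_strongly_concave_on_bounded: "\<exists>\<kappa>>0. \<forall>t\<in>{wl..B}. u'' t \<le> - \<kappa>"
proof (cases "wl \<le> B")
  case True
  have "continuous_on {wl..B} u''"
    by (rule continuous_on_subset[OF u''_continuous]) auto
  then obtain t0 where t0: "t0 \<in> {wl..B}" "\<forall>t\<in>{wl..B}. u'' t \<le> u'' t0"
    using continuous_attains_sup[of "{wl..B}" u''] True by auto
  then show ?thesis using u''_neg[of t0] by (intro exI[of _ "- u'' t0"]) auto
qed (auto intro: exI[of _ 1])

lemma measurable_u_comp:
  assumes "w \<in> borel_measurable M" "\<forall>x\<in>space M. wl \<le> w x"
  shows "(\<lambda>x. u (w x)) \<in> borel_measurable M"
proof -
  have "continuous_on UNIV (\<lambda>t. u (max wl t))"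
    by (rule continuous_on_compose2[OF continuous_on_u]) (auto intro!: continuous_intros)
  then have "(\<lambda>x. u (max wl (w x))) \<in> borel_measurable M"
    using measurable_compose[OF assms(1) borel_measurable_continuous_onI] by simp
  then show ?thesis
    using assms(2) by (subst measurable_cong[where g = "\<lambda>x. u (max wl (w x))"]) (auto simp: max_def)
qed

lemma integrable_u_comp:
  assumes "finite_measure M" "integrable M w" "\<forall>x\<in>space M. wl \<le> w x"
  shows "integrable M (\<lambda>x. u (w x))"
proof (rule Bochner_Integration.integrable_bound[of _ "\<lambda>x. \<bar>u wl\<bar> + u' wl * (w x - wl)"])
  show "integrable M (\<lambda>x. \<bar>u wl\<bar> + u' wl * (w x - wl))"
    using assms by (intro Bochner_Integration.integrable_add Bochner_Integration.integrable_diff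
        finite_measure.integrable_const integrable_mult_right) auto
  have "u wl \<le> u (w x)" "u (w x) - u wl \<le> u' wl * (w x - wl)" if "x \<in> space M" for x
    using assms that by (auto intro: u_mono u_increment_le)
  moreover have "0 \<le> u' wl" using u'_pos[of wl] by simp
  ultimately show "AE x in M. norm (u (w x)) \<le> norm (\<bar>u wl\<bar> + u' wl * (w x - wl))"
    using assms by (intro AE_I2) (force simp: abs_le_iff)
  show "(\<lambda>x. u (w x)) \<in> borel_measurable M"
    using assms by (intro measurable_u_comp borel_measurable_integrable) auto
qed

lemma strong_Jensen:
  assumes "prob_space P" "integrable P w" "\<forall>x\<in>space P. wl \<le> w x"
    and curv: "\<forall>t\<in>{wl..integral\<^sup>L P w}. u'' t \<le> - \<kappa>"
  shows "(\<integral>x. u (w x) \<partial>P) + \<kappa> / 2 * (\<integral>x. (max 0 (integral\<^sup>L P w - w x))\<^sup>2 \<partial>P) \<le> u (integral\<^sup>L P w)"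
proof -
  interpret prob_space P by fact
  define W where "W = integral\<^sup>L P w"
  define Y where "Y x = max 0 (W - w x)" for x
  have "wl \<le> W"
    using assms unfolding W_def by (intro integral_ge_const) (auto intro!: AE_I2)
  have pointwise: "u (w x) + \<kappa> / 2 * (Y x)\<^sup>2 \<le> u W + u' W * (w x - W)" if "x \<in> space P" for x
  proof (cases "w x \<le> W")
    case True
    then have "u (w x) \<le> u W + u' W * (w x - W) - \<kappa> / 2 * (w x - W)\<^sup>2"
      using assms that curv \<open>wl \<le> W\<close> by (intro u_le_tangent_minus_quadratic) (auto simp: W_def)
    then show ?thesis using True by (simp add: Y_def power2_commute)
  next
    case False
    then show ?thesis using u_le_tangent[of W "w x"] assms that \<open>wl \<le> W\<close> by (simp add: Y_def)
  qed
  have int_Y2: "integrable P (\<lambda>x. (Y x)\<^sup>2)"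
    unfolding Y_def using assms by (intro integrable_shortfall_sq) auto
  have "(\<integral>x. u (w x) + \<kappa> / 2 * (Y x)\<^sup>2 \<partial>P) \<le> (\<integral>x. u W + u' W * (w x - W) \<partial>P)"
    using pointwise assms int_Y2 integrable_u_comp[of P w]
    by (intro integral_mono) (auto simp: finite_measure_axioms)
  then show ?thesis
    using assms int_Y2 integrable_u_comp[of P w]
    by (simp add: Y_def W_def prob_space finite_measure_axioms)
qed

lemma utility_shortfall_bounds:
  assumes "wl \<le> v" "wl \<le> W" "W \<le> B"
  shows "0 \<le> max 0 (u W - u v) \<and> max 0 (u W - u v) \<le> u B - u wl \<and>
    max 0 (u W - u v) \<le> u' wl * max 0 (W - v)"
proof -
  have "u wl \<le> u v" "u W \<le> u B" "u wl \<le> u B"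
    using assms by (auto intro: u_mono)
  moreover have "u W - u v \<le> u' wl * (W - v)" if "v \<le> W"
    using u_increment_le[of v W] assms that by auto
  moreover have "u W \<le> u v" if "W \<le> v"
    using u_mono[OF \<open>wl \<le> W\<close> that] .
  ultimately show ?thesis
    using u'_pos[of wl] by (auto simp: max_def mult_nonneg_nonneg)
qed

text \<open>Against a deviation with likelihood ratio \<open>\<Lambda>\<close>, incentive compatibility forces the shortfall
  of the wage below its mean to have second moment of order \<open>\<Delta>\<^sup>2 / K\<close>, and strong concavity
  turns this second moment into a premium over the wage \<open>wc\<close> that meets participation.\<close>
lemma mean_wage_lower_bound:
  fixes P :: "'b measure" and \<Lambda> w :: "'b \<Rightarrow> real"
  assumes P: "prob_space P" and Pa: "prob_space (density P \<Lambda>)"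
    and [measurable]: "\<Lambda> \<in> borel_measurable P" and \<Lambda>_nonneg: "\<And>x. 0 \<le> \<Lambda> x"
    and w: "integrable P w" "\<forall>x\<in>space P. wl \<le> w x"
    and IR: "u wc \<le> (\<integral>x. u (w x) \<partial>P)" and "wl \<le> wc"
    and IC: "integrable (density P \<Lambda>) (\<lambda>x. u (w x))"
      "(\<integral>x. u (w x) \<partial>density P \<Lambda>) \<le> (\<integral>x. u (w x) \<partial>P) - \<Delta>"
    and "0 < \<Delta>" and curv: "\<forall>t\<in>{wl..wc + 1}. u'' t \<le> - \<kappa>" "0 < \<kappa>" and "0 < K"
    and tail: "(u (wc + 1) - u wl) * measure (density P \<Lambda>) {x\<in>space P. K \<le> \<Lambda> x} \<le> \<Delta> / 2"
  shows "wc + min 1 (\<kappa> * \<Delta>\<^sup>2 / (8 * u' wc * (u' wl)\<^sup>2 * K)) \<le> (\<integral>x. w x \<partial>P)"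
proof (cases "wc + 1 \<le> (\<integral>x. w x \<partial>P)")
  case False
  interpret prob_space P by fact
  define W where "W = (\<integral>x. w x \<partial>P)"
  define Y where "Y x = max 0 (W - w x)" for x
  define Q where "Q = (\<integral>x. (Y x)\<^sup>2 \<partial>P)"
  define D where "D x = max 0 (u W - u (w x))" for x
  have [measurable]: "w \<in> borel_measurable P" "(\<lambda>x. u (w x)) \<in> borel_measurable P"
    using w by (auto intro: borel_measurable_integrable measurable_u_comp)
  have "wl \<le> W"
    using w unfolding W_def by (intro integral_ge_const) (auto intro!: AE_I2)
  have Jensen: "(\<integral>x. u (w x) \<partial>P) + \<kappa> / 2 * Q \<le> u W"
    using strong_Jensen[OF P w] curv False by (simp add: W_def Y_def Q_def)
  have "0 \<le> \<kappa> / 2 * Q"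
    using \<open>0 < \<kappa>\<close> unfolding Q_def by (simp add: integral_nonneg_AE)
  then have "\<Delta> \<le> u W - (\<integral>x. u (w x) \<partial>density P \<Lambda>)"
    using Jensen IC(2) by linarith
  also have "\<dots> \<le> (\<integral>x. D x \<partial>density P \<Lambda>)"
    unfolding D_def by (rule integral_pos_part_ge[OF Pa IC(1)])
  finally have mean: "\<Delta> \<le> (\<integral>x. D x \<partial>density P \<Lambda>)" .
  have D: "0 \<le> D x \<and> D x \<le> u (wc + 1) - u wl \<and> D x \<le> u' wl * Y x" if "x \<in> space P" for x
    using utility_shortfall_bounds[of "w x" W "wc + 1"] w that \<open>wl \<le> W\<close> False
    by (simp add: D_def Y_def W_def)
  have "integrable P (\<lambda>x. (u' wl * Y x)\<^sup>2)"
    unfolding power_mult_distrib Y_def using w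
    by (intro integrable_mult_right integrable_shortfall_sq) auto
  from second_moment_lower_bound[OF Pa _ _ \<Lambda>_nonneg D this \<open>0 < K\<close> \<open>0 < \<Delta>\<close> mean]
  have "\<Delta>\<^sup>2 \<le> 4 * K * ((u' wl)\<^sup>2 * Q)"
    using tail by (simp add: Q_def D_def power_mult_distrib)
  moreover have "\<kappa> / 2 * Q \<le> u' wc * (W - wc)"
    using Jensen IR u_le_tangent[OF \<open>wl \<le> wc\<close> \<open>wl \<le> W\<close>] by linarith
  ultimately have "\<kappa> * \<Delta>\<^sup>2 / (8 * u' wc * (u' wl)\<^sup>2 * K) \<le> W - wc"
    using u'_pos[of wl] u'_pos[OF \<open>wl \<le> wc\<close>] \<open>0 < K\<close> \<open>0 < \<kappa>\<close>
    by (intro gap_from_second_moment) auto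
  then show ?thesis
    by (simp add: W_def)
qed (use \<open>0 < \<kappa>\<close> in auto)

end

section \<open>Likelihood ratios of the monitoring technology\<close>

locale monitoring =
  fixes X :: "'x::euclidean_space set" and \<mu> :: "'a \<Rightarrow> 'x measure" and ast :: 'a
  assumes monitoring_tech: "monitoring_tech X \<mu>"
begin

lemma prob_space_\<mu>: "prob_space (\<mu> a)"
  and space_\<mu>: "space (\<mu> a) = X"
  and sets_\<mu>: "sets (\<mu> a) = sets (\<mu> b)"
  and absolutely_continuous_\<mu>: "absolutely_continuous (\<mu> a) (\<mu> b)"
  using monitoring_tech by (simp_all add: monitoring_tech_def)

lemma positive_RN_deriv_exists:
  "\<exists>L. L \<in> borel_measurable (\<mu> ast) \<and> (\<forall>x. 0 < L x) \<and>
     (AE x in \<mu> ast. RN_deriv (\<mu> ast) (\<mu> a) x = ennreal (L x))"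
proof -
  interpret prob_space "\<mu> ast" by (rule prob_space_\<mu>)
  interpret Pa: prob_space "\<mu> a" by (rule prob_space_\<mu>)
  obtain D where [measurable]: "D \<in> borel_measurable (\<mu> ast)"
    and RN: "AE x in \<mu> ast. RN_deriv (\<mu> ast) (\<mu> a) x = ennreal (D x)"
    and pos: "AE x in \<mu> a. 0 < D x"
    using real_RN_deriv[OF Pa.finite_measure_axioms absolutely_continuous_\<mu> sets_\<mu>] by blast
  have "AE x in \<mu> ast. 0 < D x"
    using absolutely_continuous_AE[OF sets_\<mu> absolutely_continuous_\<mu> pos] .
  with RN have "AE x in \<mu> ast. RN_deriv (\<mu> ast) (\<mu> a) x = ennreal (if 0 < D x then D x else 1)"
    by eventually_elim simp
  then show ?thesis
    by (intro exI[of _ "\<lambda>x. if 0 < D x then D x else 1"]) auto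
qed

text \<open>A version of \<open>d\<mu>\<^sub>a / d\<mu>\<^sub>a\<^sub>s\<^sub>t\<close> that is positive everywhere, not just almost everywhere,
  so that its logarithm never hits the junk value \<open>ln 0\<close>.\<close>
definition lr :: "'a \<Rightarrow> 'x \<Rightarrow> real" where
  "lr a = (SOME L. L \<in> borel_measurable (\<mu> ast) \<and> (\<forall>x. 0 < L x) \<and>
                  (AE x in \<mu> ast. RN_deriv (\<mu> ast) (\<mu> a) x = ennreal (L x)))"

lemma lr_measurable [measurable]: "lr a \<in> borel_measurable (\<mu> b)"
  and lr_pos: "0 < lr a x"
  and RN_deriv_eq_lr: "AE x in \<mu> ast. RN_deriv (\<mu> ast) (\<mu> a) x = ennreal (lr a x)"
  using someI_ex[OF positive_RN_deriv_exists[of a]] measurable_cong_sets[OF sets_\<mu> refl]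
  unfolding lr_def[symmetric] by blast+

lemma density_lr: "density (\<mu> ast) (lr a) = \<mu> a"
proof -
  interpret prob_space "\<mu> ast" by (rule prob_space_\<mu>)
  from RN_deriv_eq_lr[of a] have "AE x in \<mu> ast. ennreal (lr a x) = RN_deriv (\<mu> ast) (\<mu> a) x"
    by eventually_elim simp
  then have "density (\<mu> ast) (lr a) = density (\<mu> ast) (RN_deriv (\<mu> ast) (\<mu> a))"
    by (intro density_cong) auto
  also have "\<dots> = \<mu> a"
    by (rule density_RN_deriv[OF absolutely_continuous_\<mu> sets_\<mu>])
  finally show ?thesis .
qed

lemma density_inverse_lr: "density (\<mu> a) (\<lambda>x. 1 / lr a x) = \<mu> ast"
proof -
  have "density (\<mu> a) (\<lambda>x. 1 / lr a x) = density (\<mu> ast) (\<lambda>x. ennreal (lr a x) * ennreal (1 / lr a x))"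
    by (subst density_lr[of a, symmetric], subst density_density_eq) auto
  also have "\<dots> = density (\<mu> ast) (\<lambda>_. 1)"
    using lr_pos[of a] by (simp add: less_imp_le lr_pos[THEN less_imp_neq, symmetric] flip: ennreal_mult)
  finally show ?thesis by (simp add: density_1)
qed

lemma KL_divergence_eq_integral_ln_lr:
  "KL_divergence (exp 1) (\<mu> ast) (\<mu> a) = (\<integral>x. ln (lr a x) \<partial>\<mu> a)"
  unfolding KL_divergence_def entropy_density_def
proof (rule integral_cong_AE)
  show "AE x in \<mu> a. (log (exp 1) \<circ> enn2real \<circ> RN_deriv (\<mu> ast) (\<mu> a)) x = ln (lr a x)"
    using absolutely_continuous_AE[OF sets_\<mu> absolutely_continuous_\<mu> RN_deriv_eq_lr[of a]]
    by eventually_elim (simp add: log_def less_imp_le[OF lr_pos])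
qed (unfold measurable_cong_sets[OF sets_\<mu>[of a ast] refl], measurable)

lemma nn_integral_RN_deriv_powr_finite:
  assumes "0 < p" "AE x in \<mu> b. RN_deriv (\<mu> b) (\<mu> b') x = ennreal (f x)" "\<And>x. 0 \<le> f x"
  shows "(\<integral>\<^sup>+x. ennreal (f x powr p) \<partial>\<mu> b) < \<infinity>"
proof -
  from assms(2) have "AE x in \<mu> b. ennreal (f x powr p) = ennreal (enn2real (RN_deriv (\<mu> b) (\<mu> b') x) powr p)"
    by eventually_elim (simp add: assms(3))
  then have "(\<integral>\<^sup>+x. ennreal (f x powr p) \<partial>\<mu> b)
      = (\<integral>\<^sup>+x. ennreal (enn2real (RN_deriv (\<mu> b) (\<mu> b') x) powr p) \<partial>\<mu> b)"
    by (rule nn_integral_cong_AE)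
  also have "\<dots> < \<infinity>"
    using monitoring_tech \<open>0 < p\<close> unfolding monitoring_tech_def by blast
  finally show ?thesis .
qed

lemma integrable_exp_ln_lr: "integrable (\<mu> a) (\<lambda>x. exp (s * ln (lr a x)))"
proof -
  have "(\<integral>\<^sup>+x. ennreal (lr a x powr s) \<partial>\<mu> a) < \<infinity>"
  proof (cases "0 \<le> s")
    case True
    have "(\<integral>\<^sup>+x. ennreal (lr a x powr s) \<partial>\<mu> a) = (\<integral>\<^sup>+x. ennreal (lr a x powr (s + 1)) \<partial>\<mu> ast)"
      using lr_pos[of a] by (subst density_lr[of a, symmetric])
        (simp add: nn_integral_density powr_add less_imp_le mult.commute flip: ennreal_mult)
    also have "\<dots> < \<infinity>"
      using True RN_deriv_eq_lr[of a] lr_pos[of a]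
      by (intro nn_integral_RN_deriv_powr_finite) (auto intro: less_imp_le)
    finally show ?thesis .
  next
    case False
    interpret prob_space "\<mu> a" by (rule prob_space_\<mu>)
    have "AE x in \<mu> a. ennreal (1 / lr a x) = RN_deriv (\<mu> a) (\<mu> ast) x"
      using density_inverse_lr[of a] by (intro RN_deriv_unique) auto
    then have RN: "AE x in \<mu> a. RN_deriv (\<mu> a) (\<mu> ast) x = ennreal (1 / lr a x)"
      by eventually_elim simp
    have "(\<integral>\<^sup>+x. ennreal (lr a x powr s) \<partial>\<mu> a) = (\<integral>\<^sup>+x. ennreal ((1 / lr a x) powr (- s)) \<partial>\<mu> a)"
      using lr_pos[of a] by (simp add: powr_minus_divide powr_divide less_imp_le)
    also have "\<dots> < \<infinity>"
      using False RN lr_pos[of a]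
      by (intro nn_integral_RN_deriv_powr_finite) (auto intro: less_imp_le)
    finally show ?thesis .
  qed
  moreover have "lr a x powr s = exp (s * ln (lr a x))" for x
    using lr_pos[of a x] by (simp add: powr_def)
  ultimately show ?thesis
    by (intro integrableI_nonneg) auto
qed

lemma integrable_ln_lr: "integrable (\<mu> a) (\<lambda>x. ln (lr a x))"
  by (rule integrable_of_exp_moments)
    (use integrable_exp_ln_lr[of a 1] integrable_exp_ln_lr[of a "- 1"] in simp_all)

lemma KL_divergence_pos:
  assumes "a \<noteq> ast"
  shows "0 < KL_divergence (exp 1) (\<mu> ast) (\<mu> a)"
proof -
  interpret information_space "\<mu> ast" "exp 1"
    by (intro information_space.intro prob_space_\<mu>) (simp add: information_space_axioms_def)
  have "integrable (density (\<mu> ast) (lr a)) (\<lambda>x. ln (lr a x))"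
    using integrable_ln_lr[of a] by (simp add: density_lr)
  then have "integrable (\<mu> ast) (\<lambda>x. lr a x * log (exp 1) (lr a x))"
    using lr_pos[of a] by (subst (asm) integrable_real_density) (auto simp: log_def less_imp_le)
  moreover have "\<mu> a \<noteq> \<mu> ast"
    using monitoring_tech assms unfolding monitoring_tech_def by blast
  ultimately show ?thesis
    using KL_gt_0[of "lr a"] lr_pos[of a] prob_space_\<mu>[of a]
    by (simp add: density_lr less_imp_le)
qed

lemma prob_space_sig: "prob_space (sig \<mu> a n)"
  unfolding sig_def by (intro prob_space_PiM prob_space_\<mu>)

lemma space_sig: "space (sig \<mu> a n) = space (sig \<mu> b n)"
  unfolding sig_def by (simp add: space_PiM space_\<mu>)

lemma sets_sig: "sets (sig \<mu> a n) = sets (sig \<mu> b n)"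
  unfolding sig_def by (intro sets_PiM_cong refl sets_\<mu>)

lemma density_sig: "density (sig \<mu> ast n) (\<lambda>x. \<Prod>i<n. lr a (x i)) = sig \<mu> a n"
proof -
  have "density (sig \<mu> ast n) (\<lambda>x. \<Prod>i<n. lr a (x i))
      = density (PiM {..<n} (\<lambda>_. \<mu> ast)) (\<lambda>x. \<Prod>i<n. ennreal (lr a (x i)))"
    unfolding sig_def using lr_pos[of a] by (simp add: prod_ennreal less_imp_le)
  also have "\<dots> = PiM {..<n} (\<lambda>_. density (\<mu> ast) (lr a))"
    using prob_space_\<mu>[of ast] prob_space_\<mu>[of a]
    by (intro PiM_density[symmetric]) (auto simp: density_lr prob_space_imp_sigma_finite)
  finally show ?thesis
    by (simp add: density_lr sig_def)
qed

lemma prod_lr_eq_exp_sum: "(\<Prod>i<(n::nat). lr a (x i)) = exp (\<Sum>i<n. ln (lr a (x i)))"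
  by (simp add: exp_sum lr_pos)

lemma prod_lr_measurable [measurable]: "(\<lambda>x. \<Prod>i<n. lr a (x i)) \<in> borel_measurable (sig \<mu> b n)"
  unfolding sig_def by measurable

lemma prod_lr_nonneg: "0 \<le> (\<Prod>i<n. lr a (x i))"
  using lr_pos by (simp add: prod_nonneg less_imp_le)

lemma lr_upper_tail_tendsto_zero:
  assumes "0 < \<delta>"
  shows "(\<lambda>n. measure (sig \<mu> a n) {x\<in>space (sig \<mu> a n).
            exp (n * (KL_divergence (exp 1) (\<mu> ast) (\<mu> a) + \<delta>)) \<le> (\<Prod>i<n. lr a (x i))}) \<longlonglongrightarrow> 0"
proof -
  have "(\<lambda>x. ln (lr a x)) \<in> borel_measurable (\<mu> a)" by measurable
  from Chernoff_tendsto_zero[OF prob_space_\<mu> this integrable_exp_ln_lr assms]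
  show ?thesis
    by (simp add: sig_def prod_lr_eq_exp_sum KL_divergence_eq_integral_ln_lr)
qed

lemma lr_lower_tail_tendsto_zero:
  assumes "0 < \<delta>"
  shows "(\<lambda>n. measure (sig \<mu> a n) {x\<in>space (sig \<mu> a n).
            (\<Prod>i<n. lr a (x i)) \<le> exp (n * (KL_divergence (exp 1) (\<mu> ast) (\<mu> a) - \<delta>))}) \<longlonglongrightarrow> 0"
proof -
  define K where "K = KL_divergence (exp 1) (\<mu> ast) (\<mu> a)"
  have moments: "integrable (\<mu> a) (\<lambda>x. exp (s * - ln (lr a x)))" for s
    using integrable_exp_ln_lr[of a "- s"] by simp
  have "(\<lambda>x. - ln (lr a x)) \<in> borel_measurable (\<mu> a)" by measurable
  from Chernoff_tendsto_zero[OF prob_space_\<mu> this moments assms]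
  have "(\<lambda>n. measure (sig \<mu> a n) {x\<in>space (sig \<mu> a n).
      real n * (- K + \<delta>) \<le> (\<Sum>i<n. - ln (lr a (x i)))}) \<longlonglongrightarrow> 0"
    by (simp add: sig_def K_def KL_divergence_eq_integral_ln_lr)
  moreover have "real n * (- K + \<delta>) \<le> (\<Sum>i<n. - ln (lr a (x i))) \<longleftrightarrow>
      (\<Prod>i<n. lr a (x i)) \<le> exp (n * (K - \<delta>))" for n x
    by (simp add: prod_lr_eq_exp_sum sum_negf right_diff_distrib) linarith
  ultimately show ?thesis
    unfolding K_def by simp
qed

lemma measure_lr_ge_le:
  assumes "0 < T"
  shows "measure (sig \<mu> ast n) {x\<in>space (sig \<mu> ast n). T \<le> (\<Prod>i<n. lr a (x i))} \<le> 1 / T"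
proof -
  have "prob_space (density (\<mu> ast) (lr a))"
    by (simp add: density_lr prob_space_\<mu>)
  note lr = integrable_probability_density[OF this lr_measurable less_imp_le[OF lr_pos]]
  show ?thesis
    using measure_PiM_prod_ge_le[OF prob_space_\<mu> lr(1) less_imp_le[OF lr_pos] assms, of n]
    by (simp add: sig_def lr(2))
qed

end

section \<open>The agency problem\<close>

locale agency = concave_utility u u' u'' wl + monitoring X \<mu> ast
  for u u' u'' :: "real \<Rightarrow> real" and wl :: real and X :: "'x::euclidean_space set"
    and \<mu> :: "'a::finite \<Rightarrow> 'x measure" and ast :: 'a +
  fixes c :: "'a \<Rightarrow> real"
  assumes c_range: "range c \<subseteq> interior (u ` {wl..})"
    and c_lower: "\<exists>a. c a < c ast"
    and c_distinct: "\<forall>a. a \<noteq> ast \<longrightarrow> c a \<noteq> c ast"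
begin

abbreviation w_FB :: real where "w_FB \<equiv> C_FB u c ast wl"

definition rate :: real where
  "rate = Min ((\<lambda>a. KL_divergence (exp 1) (\<mu> ast) (\<mu> a)) ` A_minus c ast)"

lemma u_wl_less_c: "u wl < c a"
proof -
  obtain e where "0 < e" "ball (c a) e \<subseteq> u ` {wl..}"
    using c_range mem_interior by blast
  moreover have "c a - e / 2 \<in> ball (c a) e"
    using \<open>0 < e\<close> by (simp add: dist_real_def)
  ultimately obtain t where "wl \<le> t" "u t = c a - e / 2"
    by (metis atLeast_iff imageE subsetD)
  then show ?thesis
    using u_mono[of wl t] \<open>0 < e\<close> by linarith
qed

lemma u_w_FB: "u w_FB = c ast" and wl_less_w_FB: "wl < w_FB"
proof -
  have "c ast \<in> u ` {wl..}"
    using c_range interior_subset by blast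
  then show "u w_FB = c ast"
    unfolding C_FB_def by (rule f_inv_into_f)
  moreover have "wl \<le> w_FB"
    using inv_into_into[OF \<open>c ast \<in> u ` {wl..}\<close>] unfolding C_FB_def by simp
  ultimately show "wl < w_FB"
    using u_wl_less_c[of ast] by (cases "wl = w_FB") auto
qed

lemma A_minus_nonempty: "A_minus c ast \<noteq> {}"
  using c_lower by (auto simp: A_minus_def)

lemma rate_attained: "\<exists>a\<in>A_minus c ast. KL_divergence (exp 1) (\<mu> ast) (\<mu> a) = rate"
proof -
  have "rate \<in> (\<lambda>a. KL_divergence (exp 1) (\<mu> ast) (\<mu> a)) ` A_minus c ast"
    unfolding rate_def using A_minus_nonempty by (intro Min_in) auto
  then show ?thesis by auto
qed

lemma rate_le_KL: "a \<in> A_minus c ast \<Longrightarrow> rate \<le> KL_divergence (exp 1) (\<mu> ast) (\<mu> a)"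
  unfolding rate_def by simp

lemma rate_pos: "0 < rate"
  using rate_attained KL_divergence_pos by (force simp: A_minus_def)

lemma contract_integral_form:
  assumes "is_contract \<mu> ast wl n w" "IC \<mu> u c ast wl n w" "IR \<mu> u c ast wl n w"
    and "expect_lb (sig \<mu> ast n) w wl \<noteq> \<infinity>"
  shows "integrable (sig \<mu> ast n) w" "expect_lb (sig \<mu> ast n) w wl = (\<integral>x. w x \<partial>sig \<mu> ast n)"
    "c ast \<le> (\<integral>x. u (w x) \<partial>sig \<mu> ast n)"
    "integrable (sig \<mu> a n) (\<lambda>x. u (w x))"
    "(\<integral>x. u (w x) \<partial>sig \<mu> a n) \<le> (\<integral>x. u (w x) \<partial>sig \<mu> ast n) - (c ast - c a)"
proof -
  have w: "w \<in> borel_measurable (sig \<mu> b n)" "\<forall>x\<in>space (sig \<mu> b n). wl \<le> w x" for b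
    using assms(1) measurable_cong_sets[OF sets_sig[of b n ast] refl] space_sig[of b n ast]
    by (auto simp: is_contract_def)
  have uw: "u \<circ> w \<in> borel_measurable (sig \<mu> b n)" "\<forall>x\<in>space (sig \<mu> b n). u wl \<le> (u \<circ> w) x" for b
    using w by (auto simp: comp_def intro: measurable_u_comp u_mono)
  show int: "integrable (sig \<mu> ast n) w"
    using integrable_if_expect_lb_finite[OF prob_space_sig w assms(4)] .
  then show "expect_lb (sig \<mu> ast n) w wl = (\<integral>x. w x \<partial>sig \<mu> ast n)"
    using expect_lb_eq_integral[OF prob_space_sig w] by simp
  have "integrable (sig \<mu> ast n) (u \<circ> w)"
    using integrable_u_comp[OF prob_space.finite_measure[OF prob_space_sig] int] w by (simp add: comp_def)
  then have E0: "expect_lb (sig \<mu> ast n) (u \<circ> w) (u wl) = integral\<^sup>L (sig \<mu> ast n) (u \<circ> w)"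
    by (rule expect_lb_eq_integral[OF prob_space_sig uw])
  then show "c ast \<le> (\<integral>x. u (w x) \<partial>sig \<mu> ast n)"
    using assms(3) by (simp add: IR_def comp_def)
  have "expect_lb (sig \<mu> a n) (u \<circ> w) (u wl) - ereal (c a)
      \<le> ereal (integral\<^sup>L (sig \<mu> ast n) (u \<circ> w)) - ereal (c ast)"
    using assms(2) unfolding IC_def E0 by (rule spec)
  then have ICa: "expect_lb (sig \<mu> a n) (u \<circ> w) (u wl)
      \<le> ereal (integral\<^sup>L (sig \<mu> ast n) (u \<circ> w) - (c ast - c a))"
    by (cases "expect_lb (sig \<mu> a n) (u \<circ> w) (u wl)") simp_all
  then have "expect_lb (sig \<mu> a n) (u \<circ> w) (u wl) \<noteq> \<infinity>"
    by (cases "expect_lb (sig \<mu> a n) (u \<circ> w) (u wl)") simp_all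
  then have "integrable (sig \<mu> a n) (u \<circ> w)"
    by (rule integrable_if_expect_lb_finite[OF prob_space_sig uw])
  then show "integrable (sig \<mu> a n) (\<lambda>x. u (w x))"
    by (simp add: comp_def)
  show "(\<integral>x. u (w x) \<partial>sig \<mu> a n) \<le> (\<integral>x. u (w x) \<partial>sig \<mu> ast n) - (c ast - c a)"
    using ICa expect_lb_eq_integral[OF prob_space_sig uw \<open>integrable (sig \<mu> a n) (u \<circ> w)\<close>]
    by (simp add: comp_def)
qed

subsection \<open>Lower bound on the cost of implementation\<close>

lemma contract_cost_lower_bound_at:
  assumes "a \<in> A_minus c ast" and curv: "\<forall>t\<in>{wl..w_FB + 1}. u'' t \<le> - \<kappa>" "0 < \<kappa>" and "0 < K"
    and tail: "(u (w_FB + 1) - u wl) * measure (sig \<mu> a n)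
                 {x\<in>space (sig \<mu> a n). K \<le> (\<Prod>i<n. lr a (x i))} \<le> (c ast - c a) / 2"
    and w: "is_contract \<mu> ast wl n w" "IC \<mu> u c ast wl n w" "IR \<mu> u c ast wl n w"
  shows "ereal (w_FB + min 1 (\<kappa> * (c ast - c a)\<^sup>2 / (8 * u' w_FB * (u' wl)\<^sup>2 * K)))
           \<le> expect_lb (sig \<mu> ast n) w wl"
proof (cases "expect_lb (sig \<mu> ast n) w wl = \<infinity>")
  case False
  note contract = contract_integral_form(1-3)[OF w False] contract_integral_form(4,5)[OF w False, of a]
  have "w_FB + min 1 (\<kappa> * (c ast - c a)\<^sup>2 / (8 * u' w_FB * (u' wl)\<^sup>2 * K)) \<le> (\<integral>x. w x \<partial>sig \<mu> ast n)"
  proof (rule mean_wage_lower_bound[OF prob_space_sig])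
    show "prob_space (density (sig \<mu> ast n) (\<lambda>x. \<Prod>i<n. lr a (x i)))"
      by (simp add: density_sig prob_space_sig)
    show "(\<integral>x. u (w x) \<partial>density (sig \<mu> ast n) (\<lambda>x. \<Prod>i<n. lr a (x i)))
        \<le> (\<integral>x. u (w x) \<partial>sig \<mu> ast n) - (c ast - c a)"
      using contract by (simp add: density_sig)
    show "(u (w_FB + 1) - u wl) * measure (density (sig \<mu> ast n) (\<lambda>x. \<Prod>i<n. lr a (x i)))
        {x \<in> space (sig \<mu> ast n). K \<le> (\<Prod>i<n. lr a (x i))} \<le> (c ast - c a) / 2"
      using tail by (simp add: density_sig space_sig[of a n ast])
  qed (use contract w curv \<open>0 < K\<close> \<open>a \<in> A_minus c ast\<close>
      in \<open>auto simp: u_w_FB density_sig is_contract_def A_minus_def less_imp_le[OF wl_less_w_FB] prod_lr_nonneg\<close>)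
  then show ?thesis
    using contract by simp
qed simp

lemma contract_cost_lower_bound:
  assumes "0 < \<delta>"
  shows "\<exists>C>0. \<forall>\<^sub>F n in sequentially. \<forall>w. is_contract \<mu> ast wl n w \<and> IC \<mu> u c ast wl n w \<and>
           IR \<mu> u c ast wl n w \<longrightarrow> ereal (w_FB + C * exp (- real n * (rate + \<delta>))) \<le> expect_lb (sig \<mu> ast n) w wl"
proof -
  obtain a where a: "a \<in> A_minus c ast" "KL_divergence (exp 1) (\<mu> ast) (\<mu> a) = rate"
    using rate_attained by blast
  define \<Delta> where "\<Delta> = c ast - c a"
  have "0 < \<Delta>" using a by (simp add: \<Delta>_def A_minus_def)
  obtain \<kappa> where \<kappa>: "0 < \<kappa>" "\<forall>t\<in>{wl..w_FB + 1}. u'' t \<le> - \<kappa>"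
    using u_strongly_concave_on_bounded by blast
  define C0 where "C0 = \<kappa> * \<Delta>\<^sup>2 / (8 * u' w_FB * (u' wl)\<^sup>2)"
  have "0 < C0"
    using \<kappa> \<open>0 < \<Delta>\<close> u'_pos[of wl] u'_pos[OF less_imp_le[OF wl_less_w_FB]] by (simp add: C0_def)
  define K where "K n = exp (real n * (rate + \<delta>))" for n :: nat
  have "(\<lambda>n. (u (w_FB + 1) - u wl) * measure (sig \<mu> a n)
      {x\<in>space (sig \<mu> a n). K n \<le> (\<Prod>i<n. lr a (x i))}) \<longlonglongrightarrow> (u (w_FB + 1) - u wl) * 0"
    using lr_upper_tail_tendsto_zero[OF assms, of a] a by (intro tendsto_mult_left) (simp add: K_def)
  then have "\<forall>\<^sub>F n in sequentially. (u (w_FB + 1) - u wl) * measure (sig \<mu> a n)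
      {x\<in>space (sig \<mu> a n). K n \<le> (\<Prod>i<n. lr a (x i))} < \<Delta> / 2"
    by (rule order_tendstoD(2)) (use \<open>0 < \<Delta>\<close> in simp)
  then have "\<forall>\<^sub>F n in sequentially. \<forall>w. is_contract \<mu> ast wl n w \<and> IC \<mu> u c ast wl n w \<and>
      IR \<mu> u c ast wl n w \<longrightarrow> ereal (w_FB + min 1 (C0 / K n)) \<le> expect_lb (sig \<mu> ast n) w wl"
    using contract_cost_lower_bound_at[OF a(1) \<kappa>(2,1)]
    by (elim eventually_mono) (simp add: C0_def K_def \<Delta>_def)
  moreover have "min 1 C0 * exp (- real n * (rate + \<delta>)) \<le> min 1 (C0 / K n)" for n
  proof -
    have "exp (- real n * (rate + \<delta>)) \<le> 1"
      using rate_pos assms by simp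
    moreover have "C0 / K n = C0 * exp (- real n * (rate + \<delta>))"
      by (simp add: K_def exp_minus divide_inverse)
    ultimately show ?thesis
      using \<open>0 < C0\<close> by (auto simp: min_def mult_le_one mult_right_mono)
  qed
  ultimately show ?thesis
    using \<open>0 < C0\<close>
    by (intro exI[of _ "min 1 C0"]) (auto elim!: eventually_mono intro: order_trans[rotated])
qed

subsection \<open>Binary contracts attaining the rate\<close>

lemma expect_lb_u_binary:
  assumes "E \<in> sets (sig \<mu> ast n)" "wl \<le> wH"
  shows "expect_lb (sig \<mu> b n) (u \<circ> (\<lambda>x. if x \<in> E then wl else wH)) (u wl)
    = ereal (u wl + (u wH - u wl) * measure (sig \<mu> b n) (space (sig \<mu> ast n) - E))"
proof -
  have "u \<circ> (\<lambda>x. if x \<in> E then wl else wH) = (\<lambda>x. if x \<in> E then u wl else u wH)"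
    by auto
  moreover have "E \<in> sets (sig \<mu> b n)"
    using assms(1) sets_sig by blast
  ultimately show ?thesis
    using expect_lb_binary[OF prob_space_sig _ u_mono[OF order_refl \<open>wl \<le> wH\<close>]]
    by (simp add: space_sig[of b n ast])
qed

lemma binary_utility_le_cost:
  assumes "wl \<le> wH"
    and IR_eq: "u wl + (u wH - u wl) * measure (sig \<mu> ast n) F = c ast"
    and IC_up: "\<And>b. c ast < c b \<Longrightarrow> u wH \<le> c b"
    and IC_down: "\<And>b. b \<in> A_minus c ast \<Longrightarrow> u wl + (u wH - u wl) * measure (sig \<mu> b n) F \<le> c b"
  shows "u wl + (u wH - u wl) * measure (sig \<mu> b n) F \<le> c b"
proof -
  consider "c b < c ast" | "b = ast" | "c ast < c b"
    using c_distinct by force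
  then show ?thesis
  proof cases
    case 3
    have "(u wH - u wl) * measure (sig \<mu> b n) F \<le> u wH - u wl"
      using u_mono[OF order_refl \<open>wl \<le> wH\<close>] prob_space.prob_le_1[OF prob_space_sig]
      by (intro mult_left_le) auto
    with IC_up[OF 3] show ?thesis by linarith
  qed (use IC_down IR_eq in \<open>auto simp: A_minus_def\<close>)
qed

lemma binary_contract_for_event:
  fixes n :: nat and E :: "(nat \<Rightarrow> 'x) set" and wH :: real
  defines "S \<equiv> space (sig \<mu> ast n)"
  defines "w \<equiv> \<lambda>x. if x \<in> E then wl else wH"
  assumes E: "E \<in> sets (sig \<mu> ast n)" and "wl \<le> wH"
    and IR_eq: "u wl + (u wH - u wl) * measure (sig \<mu> ast n) (S - E) = c ast"
    and IC_up: "\<And>b. c ast < c b \<Longrightarrow> u wH \<le> c b"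
    and IC_down: "\<And>b. b \<in> A_minus c ast \<Longrightarrow> u wl + (u wH - u wl) * measure (sig \<mu> b n) (S - E) \<le> c b"
  shows "is_contract \<mu> ast wl n w" "IC \<mu> u c ast wl n w" "IR \<mu> u c ast wl n w"
    "card (w ` S) = 2" "expect_lb (sig \<mu> ast n) w wl \<le> ereal wH"
proof -
  note utility = expect_lb_u_binary[OF E \<open>wl \<le> wH\<close>, folded w_def S_def]
  show "is_contract \<mu> ast wl n w"
    using E \<open>wl \<le> wH\<close> by (auto simp: is_contract_def w_def)
  show "IR \<mu> u c ast wl n w"
    using utility[of ast] IR_eq by (simp add: IR_def)
  have "u wl + (u wH - u wl) * measure (sig \<mu> b n) (S - E) \<le> c b" for b
    using binary_utility_le_cost[OF \<open>wl \<le> wH\<close>, of n "S - E"] IR_eq IC_up IC_down by blast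
  then show "IC \<mu> u c ast wl n w"
    unfolding IC_def utility using IR_eq by simp
  obtain a where a: "a \<in> A_minus c ast"
    using A_minus_nonempty by blast
  have "measure (sig \<mu> a n) S = 1" "measure (sig \<mu> ast n) S = 1"
    using prob_space.prob_space[OF prob_space_sig, of a n] prob_space.prob_space[OF prob_space_sig, of ast n]
    by (simp_all add: S_def space_sig[of a n ast])
  then have "E \<noteq> {}"
    using IC_down[OF a] IR_eq a by (auto simp: A_minus_def)
  moreover have "S - E \<noteq> {}"
  proof -
    have "measure (sig \<mu> ast n) (S - E) \<noteq> 0"
      using IR_eq u_wl_less_c[of ast] by auto
    then show ?thesis by (metis measure_empty)
  qed
  moreover have "wl \<noteq> wH"
    using IR_eq u_wl_less_c[of ast] by auto
  ultimately show "card (w ` S) = 2"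
    unfolding w_def using sets.sets_into_space[OF E] by (intro card_image_binary) (auto simp: S_def)
  have "expect_lb (sig \<mu> ast n) w wl = ereal (wl + (wH - wl) * measure (sig \<mu> ast n) (S - E))"
    unfolding w_def S_def using expect_lb_binary[OF prob_space_sig E \<open>wl \<le> wH\<close>] .
  also have "\<dots> \<le> ereal wH"
    using \<open>wl \<le> wH\<close> mult_left_le[OF prob_space.prob_le_1[OF prob_space_sig], of "wH - wl" ast n "S - E"]
    by simp
  finally show "expect_lb (sig \<mu> ast n) w wl \<le> ereal wH" .
qed

text \<open>The event on which the binary contract pays the lowest wage.\<close>
definition alarm :: "real \<Rightarrow> nat \<Rightarrow> (nat \<Rightarrow> 'x) set" where
  "alarm \<delta> n = (\<Union>a\<in>A_minus c ast. {x\<in>space (sig \<mu> ast n).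
      exp (n * (KL_divergence (exp 1) (\<mu> ast) (\<mu> a) - \<delta>)) \<le> (\<Prod>i<n. lr a (x i))})"

lemma alarm_sets: "alarm \<delta> n \<in> sets (sig \<mu> b n)"
  unfolding alarm_def sets_sig[of b n ast] by measurable

lemma prob_alarm_le: "measure (sig \<mu> ast n) (alarm \<delta> n) \<le> card (A_minus c ast) * exp (- n * (rate - \<delta>))"
proof -
  interpret prob_space "sig \<mu> ast n" by (rule prob_space_sig)
  have "measure (sig \<mu> ast n) (alarm \<delta> n) \<le> (\<Sum>a\<in>A_minus c ast. measure (sig \<mu> ast n)
      {x\<in>space (sig \<mu> ast n). exp (n * (KL_divergence (exp 1) (\<mu> ast) (\<mu> a) - \<delta>)) \<le> (\<Prod>i<n. lr a (x i))})"
    unfolding alarm_def by (intro finite_measure_subadditive_finite) auto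
  also have "\<dots> \<le> (\<Sum>a\<in>A_minus c ast. exp (- n * (rate - \<delta>)))"
  proof (intro sum_mono)
    fix a assume "a \<in> A_minus c ast"
    have "measure (sig \<mu> ast n) {x\<in>space (sig \<mu> ast n).
        exp (n * (KL_divergence (exp 1) (\<mu> ast) (\<mu> a) - \<delta>)) \<le> (\<Prod>i<n. lr a (x i))}
        \<le> 1 / exp (n * (KL_divergence (exp 1) (\<mu> ast) (\<mu> a) - \<delta>))"
      by (rule measure_lr_ge_le) simp
    also have "\<dots> = exp (- n * (KL_divergence (exp 1) (\<mu> ast) (\<mu> a) - \<delta>))"
      by (simp add: exp_minus divide_inverse)
    also have "\<dots> \<le> exp (- n * (rate - \<delta>))"
      using rate_le_KL[OF \<open>a \<in> A_minus c ast\<close>] by (simp add: mult_left_mono)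
    finally show "measure (sig \<mu> ast n) {x\<in>space (sig \<mu> ast n).
        exp (n * (KL_divergence (exp 1) (\<mu> ast) (\<mu> a) - \<delta>)) \<le> (\<Prod>i<n. lr a (x i))}
        \<le> exp (- n * (rate - \<delta>))" .
  qed
  finally show ?thesis by simp
qed

lemma prob_no_alarm_tendsto_zero:
  assumes "b \<in> A_minus c ast" "0 < \<delta>"
  shows "(\<lambda>n. measure (sig \<mu> b n) (space (sig \<mu> ast n) - alarm \<delta> n)) \<longlonglongrightarrow> 0"
proof (rule tendsto_sandwich[OF _ _ tendsto_const lr_lower_tail_tendsto_zero[OF assms(2), of b]])
  show "\<forall>\<^sub>F n in sequentially. measure (sig \<mu> b n) (space (sig \<mu> ast n) - alarm \<delta> n)
      \<le> measure (sig \<mu> b n) {x\<in>space (sig \<mu> b n).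
          (\<Prod>i<n. lr b (x i)) \<le> exp (n * (KL_divergence (exp 1) (\<mu> ast) (\<mu> b) - \<delta>))}"
  proof (intro always_eventually allI)
    fix n
    interpret prob_space "sig \<mu> b n" by (rule prob_space_sig)
    show "measure (sig \<mu> b n) (space (sig \<mu> ast n) - alarm \<delta> n)
      \<le> measure (sig \<mu> b n) {x\<in>space (sig \<mu> b n).
          (\<Prod>i<n. lr b (x i)) \<le> exp (n * (KL_divergence (exp 1) (\<mu> ast) (\<mu> b) - \<delta>))}"
    proof (rule finite_measure_mono)
      show "space (sig \<mu> ast n) - alarm \<delta> n \<subseteq> {x\<in>space (sig \<mu> b n).
          (\<Prod>i<n. lr b (x i)) \<le> exp (n * (KL_divergence (exp 1) (\<mu> ast) (\<mu> b) - \<delta>))}"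
        using assms(1) space_sig[of b n ast] by (auto simp: alarm_def)
    qed measurable
  qed
qed simp

lemma eventually_no_alarm:
  assumes "0 < \<delta>"
  shows "\<forall>\<^sub>F n in sequentially. \<forall>b\<in>A_minus c ast.
           M * measure (sig \<mu> b n) (space (sig \<mu> ast n) - alarm \<delta> n) < c b - u wl"
proof -
  have "\<forall>\<^sub>F n in sequentially. M * measure (sig \<mu> b n) (space (sig \<mu> ast n) - alarm \<delta> n) < c b - u wl"
    if "b \<in> A_minus c ast" for b
    using tendsto_mult_right_zero[OF prob_no_alarm_tendsto_zero[OF that assms], of M] u_wl_less_c[of b]
    by (intro order_tendstoD(2)) auto
  then show ?thesis
    by (simp add: eventually_ball_finite)
qed

lemma wage_for_utility_level:
  assumes "wl \<le> B" "c ast \<le> uH" "uH \<le> u B"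
  shows "\<exists>wH. w_FB \<le> wH \<and> wH \<le> B \<and> u wH = uH \<and> u' B * (wH - w_FB) \<le> uH - c ast"
proof -
  have "w_FB \<le> B"
    using u_strict_mono[of B w_FB] assms u_w_FB by force
  moreover have "continuous_on {w_FB..B} u"
    by (rule continuous_on_subset[OF continuous_on_u]) (use wl_less_w_FB in auto)
  ultimately obtain wH where wH: "w_FB \<le> wH" "wH \<le> B" "u wH = uH"
    using IVT'[of u w_FB uH B] assms u_w_FB by auto
  moreover have "u' B * (wH - w_FB) \<le> u wH - u w_FB"
    using wH wl_less_w_FB by (intro u_increment_ge) auto
  ultimately show ?thesis
    using u_w_FB by auto
qed

lemma upward_gap: "\<exists>\<gamma>>0. c ast + \<gamma> \<in> u ` {wl..} \<and> (\<forall>b. c ast < c b \<longrightarrow> c ast + \<gamma> \<le> c b)"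
proof -
  obtain \<epsilon> where "0 < \<epsilon>" and \<epsilon>: "ball (c ast) \<epsilon> \<subseteq> u ` {wl..}"
    using c_range mem_interior by blast
  define \<gamma> where "\<gamma> = Min (insert (\<epsilon> / 2) ((\<lambda>b. c b - c ast) ` {b. c ast < c b}))"
  have "0 < \<gamma>" "\<And>b. c ast < c b \<Longrightarrow> \<gamma> \<le> c b - c ast"
    using \<open>0 < \<epsilon>\<close> by (auto simp: \<gamma>_def)
  moreover have "\<gamma> \<le> \<epsilon> / 2"
    unfolding \<gamma>_def by (rule Min_le) auto
  moreover have "c ast + \<gamma> \<in> ball (c ast) \<epsilon>"
    using \<open>0 < \<gamma>\<close> \<open>\<gamma> \<le> \<epsilon> / 2\<close> \<open>0 < \<epsilon>\<close> by (simp add: dist_real_def)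
  ultimately show ?thesis
    using \<epsilon> by (intro exI[of _ \<gamma>]) force
qed

lemma binary_contract_cost_at:
  fixes n :: nat and \<delta> :: real
  defines "p \<equiv> measure (sig \<mu> ast n) (alarm \<delta> n)"
  assumes B: "wl \<le> B" "u B = c ast + \<gamma>" and "0 < \<gamma>"
    and gap: "\<And>b. c ast < c b \<Longrightarrow> c ast + \<gamma> \<le> c b"
    and p: "p \<le> 1 / 2" "2 * (c ast - u wl) * p \<le> \<gamma>"
    and no_alarm: "\<And>b. b \<in> A_minus c ast \<Longrightarrow>
      (c ast + \<gamma> - u wl) * measure (sig \<mu> b n) (space (sig \<mu> ast n) - alarm \<delta> n) \<le> c b - u wl"
  shows "\<exists>w. is_contract \<mu> ast wl n w \<and> card (w ` space (sig \<mu> ast n)) = 2 \<and>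
           IC \<mu> u c ast wl n w \<and> IR \<mu> u c ast wl n w \<and>
           expect_lb (sig \<mu> ast n) w wl \<le> ereal (w_FB + 2 * (c ast - u wl) * p / u' B)"
proof -
  interpret prob_space "sig \<mu> ast n" by (rule prob_space_sig)
  define uH where "uH = c ast + (c ast - u wl) * p / (1 - p)"
  have "0 \<le> p" by (simp add: p_def)
  note levels = binary_utility_levels[OF u_wl_less_c[of ast] \<open>0 \<le> p\<close> p(1), folded uH_def]
  obtain wH where wH: "w_FB \<le> wH" "u wH = uH" "u' B * (wH - w_FB) \<le> uH - c ast"
    using wage_for_utility_level[OF B(1)] levels p(2) B(2) by fastforce
  have "wl \<le> wH" using wH wl_less_w_FB by simp
  have compl: "measure (sig \<mu> ast n) (space (sig \<mu> ast n) - alarm \<delta> n) = 1 - p"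
    by (simp add: p_def prob_compl alarm_sets)
  have IC_down: "u wl + (u wH - u wl) * measure (sig \<mu> b n) (space (sig \<mu> ast n) - alarm \<delta> n) \<le> c b"
    if "b \<in> A_minus c ast" for b
  proof -
    have "(u wH - u wl) * measure (sig \<mu> b n) (space (sig \<mu> ast n) - alarm \<delta> n)
        \<le> (c ast + \<gamma> - u wl) * measure (sig \<mu> b n) (space (sig \<mu> ast n) - alarm \<delta> n)"
      using levels(3) p(2) wH(2) by (intro mult_right_mono) auto
    then show ?thesis using no_alarm[OF that] by linarith
  qed
  from wH(3) have "(wH - w_FB) * u' B \<le> 2 * (c ast - u wl) * p"
    using levels(3) by (simp add: mult.commute)
  then have "wH - w_FB \<le> 2 * (c ast - u wl) * p / u' B"
    using u'_pos[OF \<open>wl \<le> B\<close>] by (simp only: pos_le_divide_eq)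
  then have cost: "wH \<le> w_FB + 2 * (c ast - u wl) * p / u' B"
    by simp
  have IR_eq: "u wl + (u wH - u wl) * measure (sig \<mu> ast n) (space (sig \<mu> ast n) - alarm \<delta> n) = c ast"
    using levels(1) wH(2) compl by simp
  have IC_up: "u wH \<le> c b" if "c ast < c b" for b
    using gap[OF that] levels(3) p(2) wH(2) by linarith
  note contract = binary_contract_for_event[OF alarm_sets \<open>wl \<le> wH\<close> IR_eq IC_up IC_down]
  show ?thesis
    using contract(1-4) order_trans[OF contract(5)] cost by auto
qed

lemma binary_contract_cost_upper_bound:
  assumes "0 < \<delta>" "\<delta> < rate"
  shows "\<exists>C>0. \<forall>\<^sub>F n in sequentially. \<exists>w. is_contract \<mu> ast wl n w \<and> card (w ` space (sig \<mu> ast n)) = 2 \<and>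
           IC \<mu> u c ast wl n w \<and> IR \<mu> u c ast wl n w \<and>
           expect_lb (sig \<mu> ast n) w wl \<le> ereal (w_FB + C * exp (- real n * (rate - \<delta>)))"
proof -
  obtain \<gamma> B where "0 < \<gamma>" and gap: "\<And>b. c ast < c b \<Longrightarrow> c ast + \<gamma> \<le> c b"
    and B: "wl \<le> B" "u B = c ast + \<gamma>"
    using upward_gap by (metis atLeast_iff imageE)
  define N where "N = real (card (A_minus c ast))"
  define e where "e n = exp (- real n * (rate - \<delta>))" for n :: nat
  have "0 < c ast - u wl" using u_wl_less_c[of ast] by simp
  have "e \<longlonglongrightarrow> 0"
    unfolding e_def using assms by (intro exp_neg_mult_tendsto_zero) simp
  then have "(\<lambda>n. N * e n) \<longlonglongrightarrow> 0" "(\<lambda>n. 2 * (c ast - u wl) * (N * e n)) \<longlonglongrightarrow> 0"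
    using tendsto_mult_right_zero by blast+
  then have small: "\<forall>\<^sub>F n in sequentially. N * e n < 1 / 2 \<and> 2 * (c ast - u wl) * (N * e n) < \<gamma>"
    using \<open>0 < \<gamma>\<close> by (intro eventually_conj order_tendstoD(2)[of _ 0]) auto
  show ?thesis
  proof (intro exI conjI)
    show "0 < 2 * (c ast - u wl) * N / u' B"
      using \<open>0 < c ast - u wl\<close> u'_pos[OF B(1)] A_minus_nonempty by (simp add: N_def card_gt_0_iff)
    show "\<forall>\<^sub>F n in sequentially. \<exists>w. is_contract \<mu> ast wl n w \<and> card (w ` space (sig \<mu> ast n)) = 2 \<and>
           IC \<mu> u c ast wl n w \<and> IR \<mu> u c ast wl n w \<and> expect_lb (sig \<mu> ast n) w wl
           \<le> ereal (w_FB + 2 * (c ast - u wl) * N / u' B * exp (- real n * (rate - \<delta>)))"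
      using small eventually_no_alarm[OF \<open>0 < \<delta>\<close>, of "c ast + \<gamma> - u wl"]
    proof eventually_elim
      case (elim n)
      define p where "p = measure (sig \<mu> ast n) (alarm \<delta> n)"
      have "p \<le> N * e n"
        using prob_alarm_le[of n \<delta>] by (simp add: p_def N_def e_def)
      then have "2 * (c ast - u wl) * p / u' B \<le> 2 * (c ast - u wl) * N / u' B * e n"
        using \<open>0 < c ast - u wl\<close> u'_pos[OF B(1)] by (simp add: divide_right_mono mult_left_mono)
      moreover have "2 * (c ast - u wl) * p \<le> 2 * (c ast - u wl) * (N * e n)"
        using \<open>p \<le> N * e n\<close> \<open>0 < c ast - u wl\<close> by (intro mult_left_mono) auto
      then have "p \<le> 1 / 2" "2 * (c ast - u wl) * p \<le> \<gamma>"
        using \<open>p \<le> N * e n\<close> elim(1) by linarith+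
      ultimately show ?case
        using binary_contract_cost_at[OF B \<open>0 < \<gamma>\<close> gap, of n \<delta>] elim(2)
        by (fastforce simp: p_def e_def less_imp_le intro: order_trans)
    qed
  qed
qed

lemma cost_gap_bounds:
  assumes "0 < \<delta>" "\<delta> < rate"
  shows "\<exists>C1>0. \<exists>C2>0. \<forall>\<^sub>F n in sequentially.
     ereal (C1 * exp (- real n * (rate + \<delta>))) \<le> C_SB \<mu> u c ast wl n - ereal w_FB \<and>
     C_SB \<mu> u c ast wl n \<le> C_bin \<mu> u c ast wl n \<and>
     C_bin \<mu> u c ast wl n - ereal w_FB \<le> ereal (C2 * exp (- real n * (rate - \<delta>)))"
proof -
  obtain C1 where "0 < C1" and lower: "\<forall>\<^sub>F n in sequentially. \<forall>w. is_contract \<mu> ast wl n w \<and>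
      IC \<mu> u c ast wl n w \<and> IR \<mu> u c ast wl n w \<longrightarrow>
      ereal (w_FB + C1 * exp (- real n * (rate + \<delta>))) \<le> expect_lb (sig \<mu> ast n) w wl"
    using contract_cost_lower_bound[OF assms(1)] by blast
  obtain C2 where "0 < C2" and upper: "\<forall>\<^sub>F n in sequentially. \<exists>w. is_contract \<mu> ast wl n w \<and>
      card (w ` space (sig \<mu> ast n)) = 2 \<and> IC \<mu> u c ast wl n w \<and> IR \<mu> u c ast wl n w \<and>
      expect_lb (sig \<mu> ast n) w wl \<le> ereal (w_FB + C2 * exp (- real n * (rate - \<delta>)))"
    using binary_contract_cost_upper_bound[OF assms] by blast
  have "\<forall>\<^sub>F n in sequentially.
     ereal (C1 * exp (- real n * (rate + \<delta>))) \<le> C_SB \<mu> u c ast wl n - ereal w_FB \<and>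
     C_SB \<mu> u c ast wl n \<le> C_bin \<mu> u c ast wl n \<and>
     C_bin \<mu> u c ast wl n - ereal w_FB \<le> ereal (C2 * exp (- real n * (rate - \<delta>)))"
    using lower upper
  proof eventually_elim
    case (elim n)
    have "ereal (w_FB + C1 * exp (- real n * (rate + \<delta>))) \<le> C_SB \<mu> u c ast wl n"
      unfolding C_SB_def using elim(1) by (auto intro!: Inf_greatest)
    moreover have "C_SB \<mu> u c ast wl n \<le> C_bin \<mu> u c ast wl n"
      unfolding C_SB_def C_bin_def by (rule Inf_superset_mono) blast
    moreover have "C_bin \<mu> u c ast wl n \<le> ereal (w_FB + C2 * exp (- real n * (rate - \<delta>)))"
      unfolding C_bin_def using elim(2) by (blast intro: Inf_lower2)
    ultimately show ?case
      by (auto simp: ereal_le_minus_iff ereal_minus_le_iff add.commute)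
  qed
  then show ?thesis
    using \<open>0 < C1\<close> \<open>0 < C2\<close> by blast
qed

lemma exp_rate_second_best:
  "exp_rate (\<lambda>n. C_SB \<mu> u c ast wl n - ereal w_FB) rate \<and>
   exp_rate (\<lambda>n. C_bin \<mu> u c ast wl n - ereal w_FB) rate"
proof (intro conjI exp_rate_sandwich[OF rate_pos])
  fix \<delta> assume "0 < \<delta>" "\<delta> < rate"
  from cost_gap_bounds[OF this] obtain C1 C2 where "0 < C1" "0 < C2" and bounds: "\<forall>\<^sub>F n in sequentially.
     ereal (C1 * exp (- real n * (rate + \<delta>))) \<le> C_SB \<mu> u c ast wl n - ereal w_FB \<and>
     C_SB \<mu> u c ast wl n \<le> C_bin \<mu> u c ast wl n \<and>
     C_bin \<mu> u c ast wl n - ereal w_FB \<le> ereal (C2 * exp (- real n * (rate - \<delta>)))"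
    by blast
  have mono: "x \<le> y \<Longrightarrow> x - ereal w_FB \<le> y - ereal w_FB" for x y :: ereal
    by (cases x; cases y) auto
  show "\<exists>C1>0. \<exists>C2>0. \<forall>\<^sub>F n in sequentially.
      ereal (C1 * exp (- real n * (rate + \<delta>))) \<le> C_SB \<mu> u c ast wl n - ereal w_FB \<and>
      C_SB \<mu> u c ast wl n - ereal w_FB \<le> ereal (C2 * exp (- real n * (rate - \<delta>)))"
    using \<open>0 < C1\<close> \<open>0 < C2\<close> bounds
    by (intro exI[of _ C1] exI[of _ C2] conjI) (auto elim!: eventually_mono dest: mono intro: order_trans)
  show "\<exists>C1>0. \<exists>C2>0. \<forall>\<^sub>F n in sequentially.
      ereal (C1 * exp (- real n * (rate + \<delta>))) \<le> C_bin \<mu> u c ast wl n - ereal w_FB \<and>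
      C_bin \<mu> u c ast wl n - ereal w_FB \<le> ereal (C2 * exp (- real n * (rate - \<delta>)))"
    using \<open>0 < C1\<close> \<open>0 < C2\<close> bounds
    by (intro exI[of _ C1] exI[of _ C2] conjI) (auto elim!: eventually_mono dest: mono intro: order_trans)
qed

end

theorem theorem1:
  fixes X :: "'x::euclidean_space set"
    and \<mu> :: "'a::finite \<Rightarrow> 'x measure"
    and u :: "real \<Rightarrow> real" and c :: "'a \<Rightarrow> real" and ast :: 'a and wl :: real
  assumes mon: "monitoring_tech X \<mu>"
    and u_C2: "\<exists>u' u''. (\<forall>w\<ge>wl. (u has_real_derivative u' w) (at w within {wl..}) \<and>
                  (u' has_real_derivative u'' w) (at w within {wl..}) \<and>
                  u' w > 0 \<and> u'' w < 0) \<and> continuous_on {wl..} u'' \<and>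
                  (u' \<longlongrightarrow> 0) at_top"
    and c_range: "range c \<subseteq> interior (u ` {wl..})"
    and c_lower: "\<exists>a. c ast > c a"
    and c_distinct: "\<forall>a. a \<noteq> ast \<longrightarrow> c a \<noteq> c ast"
  defines "r \<equiv> Min ((\<lambda>a. KL_divergence (exp 1) (\<mu> ast) (\<mu> a)) ` A_minus c ast)"
  shows "exp_rate (\<lambda>n. C_SB \<mu> u c ast wl n - ereal (C_FB u c ast wl)) r \<and>
         exp_rate (\<lambda>n. C_bin \<mu> u c ast wl n - ereal (C_FB u c ast wl)) r"
proof -
  obtain u' u'' where "\<forall>w\<ge>wl. (u has_real_derivative u' w) (at w within {wl..}) \<and>
      (u' has_real_derivative u'' w) (at w within {wl..}) \<and> u' w > 0 \<and> u'' w < 0"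
    and "continuous_on {wl..} u''"
    using u_C2 by blast
  then interpret agency u u' u'' wl X \<mu> ast c
    using mon c_range c_lower c_distinct by unfold_locales auto
  show ?thesis
    using exp_rate_second_best unfolding r_def rate_def .
qed

end
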